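(* Let $d\ge1$, $M>d$ (or $M\ge d$ if $j=0$) and $j,k\ge0$ be fixed integers. Then as $N\to\infty$, $$s_{(N^d,\,j)/(k)}(1^{M})\sim N^{d(M-d)}\frac{G(d+1)G(M-d+1)}{G(M+1)}\sum_{r=0}^{\min(j,k)}\binom{M-d+j-r-1}{j-r}\binom{d+k-r-1}{k-r}.$$
   Context: $(N^d,j)$ denotes the partition with $d$ parts equal to $N$ followed by a part equal to $j$; $s_{(N^d,j)/(k)}(1^M)$ is the skew Schur polynomial of shape $(N^d,j)/(k)$ evaluated at $M$ variables equal to $1$. $G$ is the Barnes $G$-function ($G(1)=1$, $G(z+1)=\Gamma(z)G(z)$). For a nonnegative integer $b$, $\binom{a}{b}=a(a-1)\cdots(a-b+1)/b!$. $\sim$ denotes asymptotic equivalence as $N\to\infty$. *)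

theory Defs
  imports "HOL-Analysis.Analysis" "HOL-Library.Landau_Symbols"
begin

definition part :: "nat list \<Rightarrow> nat \<Rightarrow> nat" where
  "part l i = (if i < length l then l ! i else 0)"

text \<open>Cells (row i, column c), 0-based rows and 1-based columns, of the skew
  diagram lam/mu.\<close>
definition skew_cells :: "nat list \<Rightarrow> nat list \<Rightarrow> (nat \<times> nat) set" where
  "skew_cells lam mu = {(i, c). i < length lam \<and> part mu i < c \<and> c \<le> part lam i}"

definition ssyt :: "nat list \<Rightarrow> nat list \<Rightarrow> nat \<Rightarrow> (nat \<times> nat \<Rightarrow> nat) set" where
  "ssyt lam mu M = {T.
     (\<forall>x \<in> skew_cells lam mu. T x \<in> {1..M}) \<and>
     (\<forall>x. x \<notin> skew_cells lam mu \<longrightarrow> T x = 0) \<and>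
     (\<forall>i c. (i, c) \<in> skew_cells lam mu \<and> (i, c + 1) \<in> skew_cells lam mu
              \<longrightarrow> T (i, c) \<le> T (i, c + 1)) \<and>
     (\<forall>i c. (i, c) \<in> skew_cells lam mu \<and> (i + 1, c) \<in> skew_cells lam mu
              \<longrightarrow> T (i, c) < T (i + 1, c))}"

text \<open>The skew Schur polynomial s_{lam/mu} evaluated at M variables equal to 1,
  i.e. the number of semistandard skew tableaux with entries in {1..M}.\<close>
definition skew_schur_ones :: "nat list \<Rightarrow> nat list \<Rightarrow> nat \<Rightarrow> nat" where
  "skew_schur_ones lam mu M = card (ssyt lam mu M)"

text \<open>Barnes G-function at positive integers: G(n) = prod_{i=0}^{n-2} i!
  (determined by G(1)=1, G(z+1)=Gamma(z)G(z)).\<close>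
definition barnesG_nat :: "nat \<Rightarrow> real" where
  "barnesG_nat n = (\<Prod>i<n - 1. fact i)"

end

(*
  Split the shape (N^d, j)/(k) into its first w = max j k columns (the left block) and a
  d x (N - w) rectangle.  Call a left block good if every entry of its row i < d is at most
  i + 1.  A good left block can be glued to every rectangle tableau, and every tableau whose
  rectangle part starts with the minimal column 1, ..., d has a good left block.  Prepending
  that minimal column shows that at least R(n - 1) of the R(n) rectangle tableaux of width n
  start with it, so the count lies between c R(N - w) and c R(N - w) + K (R(N - w) - R(N - w - 1)),
  with c the number of good left blocks.  Gelfand-Tsetlin branching expresses R(n) as a
  determinant of binomial coefficients, here a Vandermonde determinant, so R(n) is a polynomial
  of degree d (M - d) with leading coefficient G(d+1) G(M-d+1) / G(M+1), and the difference term
  is negligible.  Finally, a good left block is determined by the number r of entries d in its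
  last row and two one-row tableaux of lengths k - r (entries <= d) and j - r (entries <= M - d),
  which gives c as the binomial sum.
*)

theory Submission
  imports Defs "Jordan_Normal_Form.Determinant" "HOL-Real_Asymp.Real_Asymp"
begin

section \<open>Determinants\<close>

lemma det_mat_scale_rows:
  fixes f :: "nat \<Rightarrow> nat \<Rightarrow> 'a :: comm_ring_1"
  shows "det (mat n n (\<lambda>(a, b). s a * f a b)) = (\<Prod>a<n. s a) * det (mat n n (\<lambda>(a, b). f a b))"
proof -
  have "det (mat n n (\<lambda>(a, b). s a * f a b)) =
      (\<Sum>p | p permutes {0..<n}. signof p * (\<Prod>i = 0..<n. s i * f i (p i)))"
    by (subst det_def'[of _ n]) (auto intro!: sum.cong prod.cong simp: permutes_in_image)
  also have "\<dots> = (\<Prod>a<n. s a) * (\<Sum>p | p permutes {0..<n}. signof p * (\<Prod>i = 0..<n. f i (p i)))"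
    by (simp add: sum_distrib_left prod.distrib atLeast0LessThan mult_ac)
  also have "(\<Sum>p | p permutes {0..<n}. signof p * (\<Prod>i = 0..<n. f i (p i))) =
      det (mat n n (\<lambda>(a, b). f a b))"
    by (subst det_def'[of _ n]) (auto intro!: sum.cong prod.cong simp: permutes_in_image)
  finally show ?thesis .
qed

lemma det_mat_scale_cols:
  fixes f :: "nat \<Rightarrow> nat \<Rightarrow> 'a :: comm_ring_1"
  shows "det (mat n n (\<lambda>(a, b). f a b * t b)) = (\<Prod>b<n. t b) * det (mat n n (\<lambda>(a, b). f a b))"
proof -
  have transp: "det (mat n n (\<lambda>(a, b). g a b)) = det (mat n n (\<lambda>(a, b). g b a))" for g :: "nat \<Rightarrow> nat \<Rightarrow> 'a"
    by (subst det_transpose[symmetric]) (auto intro!: arg_cong[where f = det])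
  show ?thesis
    by (subst (1 2) transp) (simp add: det_mat_scale_rows mult.commute)
qed

text \<open>Subtracting from each row the next one clears the column of ones except in the
  bottom row.\<close>
lemma det_mat_last_col_ones:
  fixes E :: "nat \<Rightarrow> nat \<Rightarrow> 'a :: idom"
  assumes ones: "\<And>a. a \<le> n \<Longrightarrow> E a n = 1"
  shows "det (mat (Suc n) (Suc n) (\<lambda>(a, b). E a b)) =
         det (mat n n (\<lambda>(a, b). E a b - E (Suc a) b))"
proof -
  define A where "A = mat (Suc n) (Suc n) (\<lambda>(a, b). E a b)"
  define U :: "'a mat" where
    "U = mat (Suc n) (Suc n) (\<lambda>(a, b). if a = b then 1 else if b = Suc a then -1 else 0)"
  have A: "A \<in> carrier_mat (Suc n) (Suc n)" and U: "U \<in> carrier_mat (Suc n) (Suc n)"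
    unfolding A_def U_def by auto
  have "upper_triangular U" unfolding U_def upper_triangular_def by auto
  hence dU: "det U = 1" using det_upper_triangular[OF _ U]
    by (simp add: prod_list_diag_prod U_def)
  have UA: "(U * A) $$ (a, b) = (if a < n then E a b - E (Suc a) b else E a b)"
    if "a < Suc n" "b < Suc n" for a b
  proof -
    have "(U * A) $$ (a, b) = (\<Sum>i<Suc n. U $$ (a, i) * A $$ (i, b))"
      using that A U by (simp add: scalar_prod_def row_def col_def atLeast0LessThan)
    also have "\<dots> = (\<Sum>i\<in>{a, Suc a} \<inter> {..<Suc n}. U $$ (a, i) * A $$ (i, b))"
      by (rule sum.mono_neutral_right) (use that in \<open>auto simp: U_def\<close>)
    also have "\<dots> = (if a < n then E a b - E (Suc a) b else E a b)"
      using that by (cases "a < n") (auto simp: U_def A_def insert_commute)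
    finally show ?thesis .
  qed
  define B1 where "B1 = mat n n (\<lambda>(a, b). E a b - E (Suc a) b)"
  define B3 :: "'a mat" where "B3 = mat 1 n (\<lambda>(a, b). E n b)"
  define B4 :: "'a mat" where "B4 = mat 1 1 (\<lambda>_. 1)"
  have eq: "U * A = four_block_mat B1 (0\<^sub>m n 1) B3 B4"
    by (rule eq_matI)
       (use A U ones in \<open>auto simp: UA B1_def B3_def B4_def less_Suc_eq simp del: index_mult_mat(1)\<close>)
  have "det A = det (U * A)" using det_mult[OF U A] dU by simp
  also have "\<dots> = det B1 * det B4"
    unfolding eq by (rule det_four_block_mat_upper_right_zero) (auto simp: B1_def B3_def B4_def)
  also have "det B4 = 1" unfolding B4_def by (simp add: det_single)
  finally show ?thesis by (simp add: A_def B1_def)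
qed

definition falling_fact :: "'a :: comm_ring_1 \<Rightarrow> nat \<Rightarrow> 'a" where
  "falling_fact t c = (\<Prod>i = 0..<c. t - of_nat i)"

definition vandermonde_prod :: "nat \<Rightarrow> (nat \<Rightarrow> 'a :: comm_ring_1) \<Rightarrow> 'a" where
  "vandermonde_prod n x = (\<Prod>b<n. \<Prod>a<b. x a - x b)"

lemma falling_fact_Suc: "falling_fact t (Suc c) = falling_fact t c * (t - of_nat c)"
  by (simp add: falling_fact_def)

definition falling_fact_col_op :: "nat \<Rightarrow> 'a :: comm_ring_1 \<Rightarrow> 'a mat" where
  "falling_fact_col_op n y = mat (Suc n) (Suc n)
     (\<lambda>(a, b). if a = b then 1 else if a = Suc b then - (y - of_nat (n - Suc b)) else 0)"

lemma falling_fact_col_op_carrier: "falling_fact_col_op n y \<in> carrier_mat (Suc n) (Suc n)"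
  by (simp add: falling_fact_col_op_def)

lemma det_falling_fact_col_op: "det (falling_fact_col_op n (y :: 'a :: idom)) = 1"
  using det_lower_triangular[OF _ falling_fact_col_op_carrier]
  by (simp add: prod_list_diag_prod falling_fact_col_op_def)

text \<open>Subtracting \<open>y - e\<close> times the column of falling factorials of degree \<open>e\<close> from the
  column of degree \<open>e + 1\<close> extracts the factor \<open>x a - y\<close> from row \<open>a\<close>; for \<open>y = x n\<close>
  the last row becomes a unit vector.\<close>
lemma falling_fact_mat_mult_col_op:
  fixes x :: "nat \<Rightarrow> 'a :: comm_ring_1"
  shows "mat (Suc n) (Suc n) (\<lambda>(a, b). falling_fact (x a) (n - b)) * falling_fact_col_op n (x n) =
    four_block_mat (mat n n (\<lambda>(a, b). (x a - x n) * falling_fact (x a) (n - 1 - b)))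
      (mat n 1 (\<lambda>_. 1)) (0\<^sub>m 1 n) (mat 1 1 (\<lambda>_. 1))"
    (is "?A * ?C = _")
proof -
  have AC: "(?A * ?C) $$ (a, b) = (if b < n then falling_fact (x a) (n - 1 - b) * (x a - x n) else 1)"
    if "a < Suc n" "b < Suc n" for a b
  proof -
    have "(?A * ?C) $$ (a, b) = (\<Sum>i<Suc n. ?A $$ (a, i) * ?C $$ (i, b))"
      using that by (simp add: scalar_prod_def row_def col_def atLeast0LessThan falling_fact_col_op_def)
    also have "\<dots> = (\<Sum>i\<in>{b, Suc b} \<inter> {..<Suc n}. ?A $$ (a, i) * ?C $$ (i, b))"
      by (rule sum.mono_neutral_right) (use that in \<open>auto simp: falling_fact_col_op_def\<close>)
    also have "\<dots> = (if b < n then falling_fact (x a) (n - 1 - b) * (x a - x n) else 1)"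
    proof (cases "b < n")
      case True
      have "n - b = Suc (n - 1 - b)" using True by simp
      with True that show ?thesis
        by (simp add: falling_fact_col_op_def falling_fact_Suc algebra_simps)
    next
      case False
      with that have "b = n" by simp
      thus ?thesis using that by (simp add: falling_fact_col_op_def falling_fact_def)
    qed
    finally show ?thesis .
  qed
  show ?thesis
    using falling_fact_col_op_carrier[of n "x n"]
    by (intro eq_matI) (auto simp: AC less_Suc_eq simp del: index_mult_mat(1))
qed

lemma det_falling_fact_vandermonde:
  fixes x :: "nat \<Rightarrow> 'a :: idom"
  shows "det (mat n n (\<lambda>(a, b). falling_fact (x a) (n - 1 - b))) = vandermonde_prod n x"
proof (induction n)
  case 0
  show ?case by (simp add: vandermonde_prod_def)
next
  case (Suc n)
  let ?A = "mat (Suc n) (Suc n) (\<lambda>(a, b). falling_fact (x a) (n - b))"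
  have "det ?A = det (?A * falling_fact_col_op n (x n))"
    using det_mult[OF _ falling_fact_col_op_carrier, of ?A] by (simp add: det_falling_fact_col_op)
  also have "\<dots> = det (mat n n (\<lambda>(a, b). (x a - x n) * falling_fact (x a) (n - 1 - b))) *
      det (mat 1 1 (\<lambda>_. 1))"
    unfolding falling_fact_mat_mult_col_op by (rule det_four_block_mat_lower_left_zero) auto
  also have "det (mat n n (\<lambda>(a, b). (x a - x n) * falling_fact (x a) (n - 1 - b))) =
      (\<Prod>a<n. x a - x n) * vandermonde_prod n x"
    unfolding det_mat_scale_rows Suc.IH ..
  also have "det (mat 1 1 (\<lambda>_. 1 :: 'a)) = 1" by (simp add: det_single)
  finally show ?case by (simp add: vandermonde_prod_def)
qed

lemma barnesG_nat_Suc: "barnesG_nat (Suc n) = (\<Prod>b<n. fact b)"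
  by (simp add: barnesG_nat_def)

lemma det_gchoose_vandermonde:
  fixes x :: "nat \<Rightarrow> real"
  shows "det (mat n n (\<lambda>(a, b). x a gchoose (n - 1 - b))) =
         vandermonde_prod n x / barnesG_nat (Suc n)"
proof -
  have "det (mat n n (\<lambda>(a, b). x a gchoose (n - 1 - b))) =
        det (mat n n (\<lambda>(a, b). falling_fact (x a) (n - 1 - b) * (1 / fact (n - 1 - b))))"
    by (simp add: gbinomial_prod_rev falling_fact_def)
  also have "\<dots> = (\<Prod>b<n. 1 / fact (n - 1 - b)) * vandermonde_prod n x"
    by (subst det_mat_scale_cols[of _ _ "\<lambda>b. 1 / fact (n - 1 - b)"])
       (use det_falling_fact_vandermonde[of n x] in simp)
  also have "(\<Prod>b<n. fact (n - 1 - b) :: real) = (\<Prod>b<n. fact b)"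
    by (rule prod.reindex_bij_witness[where i="\<lambda>b. n - 1 - b" and j="\<lambda>b. n - 1 - b"]) auto
  hence "(\<Prod>b<n. 1 / fact (n - 1 - b) :: real) = 1 / barnesG_nat (Suc n)"
    by (simp add: barnesG_nat_Suc prod_dividef)
  finally show ?thesis by simp
qed

lemma sum_gchoose_telescope:
  fixes s :: real
  assumes "lo \<le> hi"
  shows "(\<Sum>t = lo..hi. (real t + s) gchoose c) =
         ((real hi + s + 1) gchoose (Suc c)) - ((real lo + s) gchoose (Suc c))"
proof -
  define F where "F t = (real t + s) gchoose (Suc c)" for t
  have "(\<Sum>t = lo..hi. (real t + s) gchoose c) = (\<Sum>t = lo..hi. F (Suc t) - F t)"
  proof (rule sum.cong[OF refl])
    fix t
    have "(real t + s + 1) gchoose (Suc c) = ((real t + s) gchoose c) + ((real t + s) gchoose (Suc c))"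
      by (rule gbinomial_Suc_Suc)
    thus "(real t + s) gchoose c = F (Suc t) - F t" by (simp add: F_def add_ac)
  qed
  also have "\<dots> = F (Suc hi) - F lo" by (rule sum_Suc_diff) (use assms in simp)
  finally show ?thesis by (simp add: F_def add_ac)
qed

text \<open>By multilinearity in the rows, the sum over interlacing sequences factors into one sum
  per row; each telescopes by the hockey-stick identity, and the resulting differences of
  consecutive rows are undone by \<open>det_mat_last_col_ones\<close>.\<close>
lemma sum_interlacing_det_gchoose:
  fixes g :: "nat \<Rightarrow> nat"
  assumes mono: "\<And>a. a < n \<Longrightarrow> g (Suc a) \<le> g a"
  shows "(\<Sum>f \<in> PiE {0..<n} (\<lambda>a. {g (Suc a)..g a}).
            det (mat n n (\<lambda>(a, b). (real (f a) + real n - 1 - real a) gchoose (n - 1 - b))))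
       = det (mat (Suc n) (Suc n) (\<lambda>(a, b). (real (g a) + real n - real a) gchoose (n - b)))"
proof -
  define I where "I = (\<lambda>a. {g (Suc a)..g a})"
  define h where "h = (\<lambda>i t b. (real t + real n - 1 - real i) gchoose (n - 1 - b))"
  define D where "D = (\<lambda>i b. ((real (g i) + real n - real i) gchoose (n - b))
                         - ((real (g (Suc i)) + real n - real (Suc i)) gchoose (n - b)))"
  have "(\<Sum>f \<in> PiE {0..<n} I. det (mat n n (\<lambda>(a, b). (real (f a) + real n - 1 - real a) gchoose (n - 1 - b))))
      = (\<Sum>f \<in> PiE {0..<n} I. \<Sum>p | p permutes {0..<n}. of_int (sign p) * (\<Prod>i = 0..<n. h i (f i) (p i)))"
    by (rule sum.cong[OF refl], subst det_def'[of _ n])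
       (auto intro!: sum.cong prod.cong simp: permutes_in_image h_def)
  also have "\<dots> = (\<Sum>p | p permutes {0..<n}.
      of_int (sign p) * (\<Sum>f \<in> PiE {0..<n} I. \<Prod>i = 0..<n. h i (f i) (p i)))"
    by (subst sum.swap) (simp add: sum_distrib_left)
  also have "\<dots> = (\<Sum>p | p permutes {0..<n}. of_int (sign p) * (\<Prod>i = 0..<n. \<Sum>t\<in>I i. h i t (p i)))"
    by (rule sum.cong[OF refl], subst prod_sum_PiE) (auto simp: I_def)
  also have "\<dots> = (\<Sum>p | p permutes {0..<n}. of_int (sign p) * (\<Prod>i = 0..<n. D i (p i)))"
  proof (rule sum.cong[OF refl], rule arg_cong[where f="\<lambda>x. _ * x"], rule prod.cong[OF refl])
    fix p i assume p: "p \<in> {p. p permutes {0..<n}}" and i: "i \<in> {0..<n}"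
    have pi: "p i < n" using p i permutes_in_image by fastforce
    have "(\<Sum>t\<in>I i. h i t (p i)) =
        (\<Sum>t = g (Suc i)..g i. (real t + (real n - 1 - real i)) gchoose (n - 1 - p i))"
      by (simp add: I_def h_def algebra_simps)
    also have "\<dots> = ((real (g i) + (real n - 1 - real i) + 1) gchoose (Suc (n - 1 - p i)))
                   - ((real (g (Suc i)) + (real n - 1 - real i)) gchoose (Suc (n - 1 - p i)))"
      by (rule sum_gchoose_telescope) (use mono i in auto)
    also have "\<dots> = D i (p i)"
      using pi by (simp add: D_def Suc_diff_Suc algebra_simps)
    finally show "(\<Sum>t\<in>I i. h i t (p i)) = D i (p i)" .
  qed
  also have "\<dots> = det (mat n n (\<lambda>(a, b). D a b))"
    by (subst det_def'[of _ n]) (auto intro!: sum.cong prod.cong simp: permutes_in_image)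
  also have "\<dots> = det (mat (Suc n) (Suc n) (\<lambda>(a, b). (real (g a) + real n - real a) gchoose (n - b)))"
    by (subst det_mat_last_col_ones[where E="\<lambda>a b. (real (g a) + real n - real a) gchoose (n - b)"])
       (simp_all add: D_def)
  finally show ?thesis by (simp add: I_def)
qed

section \<open>Semistandard tableaux\<close>

lemma finite_skew_cells: "finite (skew_cells lam mu)"
proof -
  have "skew_cells lam mu \<subseteq> (\<Union>i<length lam. {i} \<times> {..part lam i})"
    by (auto simp: skew_cells_def)
  thus ?thesis by (rule finite_subset) auto
qed

lemma finite_bounded_funs_supported_on:
  assumes "finite C"
  shows "finite {T :: 'a \<Rightarrow> nat. (\<forall>x. x \<notin> C \<longrightarrow> T x = 0) \<and> (\<forall>x. T x \<le> M)}"
proof -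
  have "{T :: 'a \<Rightarrow> nat. (\<forall>x. x \<notin> C \<longrightarrow> T x = 0) \<and> (\<forall>x. T x \<le> M)} \<subseteq>
        (\<lambda>g x. if x \<in> C then g x else 0) ` (PiE C (\<lambda>_. {..M}))"
  proof
    fix T :: "'a \<Rightarrow> nat" assume T: "T \<in> {T. (\<forall>x. x \<notin> C \<longrightarrow> T x = 0) \<and> (\<forall>x. T x \<le> M)}"
    have "T = (\<lambda>x. if x \<in> C then restrict T C x else 0)" using T by (auto simp: fun_eq_iff)
    moreover have "restrict T C \<in> PiE C (\<lambda>_. {..M})" using T by auto
    ultimately show "T \<in> (\<lambda>g x. if x \<in> C then g x else 0) ` (PiE C (\<lambda>_. {..M}))" by blast
  qed
  thus ?thesis by (rule finite_subset) (intro finite_imageI finite_PiE assms, auto)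
qed

lemma ssytD:
  assumes "T \<in> ssyt lam mu M"
  shows "\<And>x. x \<in> skew_cells lam mu \<Longrightarrow> T x \<in> {1..M}"
    and "\<And>x. x \<notin> skew_cells lam mu \<Longrightarrow> T x = 0"
    and "\<And>i c. (i, c) \<in> skew_cells lam mu \<Longrightarrow> (i, c + 1) \<in> skew_cells lam mu \<Longrightarrow> T (i, c) \<le> T (i, c + 1)"
    and "\<And>i c. (i, c) \<in> skew_cells lam mu \<Longrightarrow> (i + 1, c) \<in> skew_cells lam mu \<Longrightarrow> T (i, c) < T (i + 1, c)"
  using assms unfolding ssyt_def by blast+

lemma ssytI:
  assumes "\<And>x. x \<in> skew_cells lam mu \<Longrightarrow> T x \<in> {1..M}"
    and "\<And>x. x \<notin> skew_cells lam mu \<Longrightarrow> T x = 0"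
    and "\<And>i c. (i, c) \<in> skew_cells lam mu \<Longrightarrow> (i, c + 1) \<in> skew_cells lam mu \<Longrightarrow> T (i, c) \<le> T (i, c + 1)"
    and "\<And>i c. (i, c) \<in> skew_cells lam mu \<Longrightarrow> (i + 1, c) \<in> skew_cells lam mu \<Longrightarrow> T (i, c) < T (i + 1, c)"
  shows "T \<in> ssyt lam mu M"
  using assms unfolding ssyt_def by blast

lemma finite_ssyt: "finite (ssyt lam mu M)"
proof -
  have "ssyt lam mu M \<subseteq> {T. (\<forall>x. x \<notin> skew_cells lam mu \<longrightarrow> T x = 0) \<and> (\<forall>x. T x \<le> M)}"
  proof (clarify, intro conjI allI impI)
    fix T x assume T: "T \<in> ssyt lam mu M"
    show "x \<notin> skew_cells lam mu \<Longrightarrow> T x = 0" using ssytD(2)[OF T] .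
    show "T x \<le> M" using ssytD(1,2)[OF T, of x] by (cases "x \<in> skew_cells lam mu") auto
  qed
  thus ?thesis by (rule finite_subset) (intro finite_bounded_funs_supported_on finite_skew_cells)
qed

lemma ssyt_row_mono:
  assumes T: "T \<in> ssyt lam mu M" and x: "(i, c) \<in> skew_cells lam mu" and y: "(i, c') \<in> skew_cells lam mu"
    and le: "c \<le> c'"
  shows "T (i, c) \<le> T (i, c')"
  using le y
proof (induction c' rule: dec_induct)
  case base thus ?case by simp
next
  case (step k)
  have "(i, k) \<in> skew_cells lam mu" using step x by (auto simp: skew_cells_def)
  hence "T (i, k) \<le> T (i, k + 1)" using ssytD(3)[OF T] step by simp
  thus ?case using step \<open>(i, k) \<in> skew_cells lam mu\<close> by simp
qed

lemma skew_cells_straight: "(i, c) \<in> skew_cells lam [] \<longleftrightarrow> i < length lam \<and> 0 < c \<and> c \<le> lam ! i"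
  by (simp add: skew_cells_def part_def)

lemma ssyt_straight_entry_lower:
  assumes T: "T \<in> ssyt lam [] M" and dec: "\<And>i. Suc i < length lam \<Longrightarrow> lam ! Suc i \<le> lam ! i"
  shows "(i, c) \<in> skew_cells lam [] \<Longrightarrow> Suc i \<le> T (i, c)"
proof (induction i)
  case 0 thus ?case using ssytD(1)[OF T, of "(0, c)"] by auto
next
  case (Suc i)
  have "(i, c) \<in> skew_cells lam []" using Suc.prems dec[of i] by (auto simp: skew_cells_straight)
  with Suc show ?case using ssytD(4)[OF T, of i c] by simp
qed

definition run_length :: "nat \<Rightarrow> (nat \<Rightarrow> bool) \<Rightarrow> nat" where
  "run_length L P = Max (insert 0 {c. 1 \<le> c \<and> c \<le> L \<and> P c})"

lemma run_length_le: "run_length L P \<le> L"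
  unfolding run_length_def by (subst Max_le_iff) auto

lemma le_run_length: "1 \<le> c \<Longrightarrow> c \<le> L \<Longrightarrow> P c \<Longrightarrow> c \<le> run_length L P"
  unfolding run_length_def by (rule Max_ge) auto

lemma le_run_length_iff:
  assumes down: "\<And>c c'. 1 \<le> c \<Longrightarrow> c \<le> c' \<Longrightarrow> c' \<le> L \<Longrightarrow> P c' \<Longrightarrow> P c"
    and c: "1 \<le> c" "c \<le> L"
  shows "c \<le> run_length L P \<longleftrightarrow> P c"
proof
  assume le: "c \<le> run_length L P"
  define A where "A = {c. 1 \<le> c \<and> c \<le> L \<and> P c}"
  have rl: "run_length L P = Max (insert 0 A)" by (simp add: run_length_def A_def)
  have fin: "finite A" by (rule finite_subset[of _ "{..L}"]) (auto simp: A_def)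
  have "A \<noteq> {}" using le c rl by auto
  hence "run_length L P = Max A" "Max A \<in> A" using fin rl by (auto simp: max_def intro: Max_in)
  thus "P c" using down[OF c(1) le] by (simp add: A_def)
qed (use c in \<open>auto intro: le_run_length\<close>)

lemma run_length_eqI:
  assumes "r \<le> L" and "\<And>c. 1 \<le> c \<Longrightarrow> c \<le> L \<Longrightarrow> P c \<longleftrightarrow> c \<le> r"
  shows "run_length L P = r"
proof -
  have "{c. 1 \<le> c \<and> c \<le> L \<and> P c} = {1..r}" using assms by auto
  moreover have "Max (insert 0 {1..r}) = r" by (rule Max_eqI) auto
  ultimately show ?thesis by (simp add: run_length_def)
qed

section \<open>Gelfand-Tsetlin branching\<close>

lemma map_restrict_upt: "map (restrict g {0..<m}) [0..<m] = map g [0..<m]"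
  by (rule map_cong) auto

definition sub_shape :: "(nat \<times> nat \<Rightarrow> nat) \<Rightarrow> nat list \<Rightarrow> nat \<Rightarrow> nat \<Rightarrow> nat" where
  "sub_shape T lam m a = run_length (lam ! a) (\<lambda>c. T (a, c) \<le> m)"

context
  fixes lam :: "nat list" and m :: nat
  assumes len: "length lam = Suc m"
    and dec: "\<And>i. Suc i < length lam \<Longrightarrow> lam ! Suc i \<le> lam ! i"
begin

lemma sub_shape_iff:
  assumes T: "T \<in> ssyt lam [] (Suc m)" and a: "a < Suc m" and c: "1 \<le> c" "c \<le> lam ! a"
  shows "T (a, c) \<le> m \<longleftrightarrow> c \<le> sub_shape T lam m a"
  unfolding sub_shape_def
proof (rule le_run_length_iff[symmetric, OF _ c])
  fix c c' assume "1 \<le> c" "c \<le> c'" "c' \<le> lam ! a" "T (a, c') \<le> m"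
  moreover have "T (a, c) \<le> T (a, c')"
    using calculation a len by (intro ssyt_row_mono[OF T]) (auto simp: skew_cells_straight)
  ultimately show "T (a, c) \<le> m" by simp
qed

lemma sub_shape_interlaces:
  assumes T: "T \<in> ssyt lam [] (Suc m)" and a: "a < m"
  shows "lam ! Suc a \<le> sub_shape T lam m a" "sub_shape T lam m a \<le> lam ! a"
proof -
  show "sub_shape T lam m a \<le> lam ! a" unfolding sub_shape_def by (rule run_length_le)
  show "lam ! Suc a \<le> sub_shape T lam m a"
  proof (cases "lam ! Suc a = 0")
    case False
    let ?l = "lam ! Suc a"
    have c1: "(Suc a, ?l) \<in> skew_cells lam []" using False a len by (simp add: skew_cells_straight)
    have c0: "(a, ?l) \<in> skew_cells lam []" using False a len dec[of a] by (simp add: skew_cells_straight)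
    have "T (a, ?l) < T (Suc a, ?l)" using ssytD(4)[OF T c0] c1 by simp
    moreover have "T (Suc a, ?l) \<le> Suc m" using ssytD(1)[OF T c1] by simp
    ultimately show ?thesis
      unfolding sub_shape_def using False dec[of a] a len by (intro le_run_length) auto
  qed simp
qed

lemma skew_cells_map_upt: "(i, c) \<in> skew_cells (map f [0..<m]) [] \<longleftrightarrow> i < m \<and> 0 < c \<and> c \<le> f i"
  by (auto simp: skew_cells_straight)

definition tableau_below :: "(nat \<times> nat \<Rightarrow> nat) \<Rightarrow> (nat \<times> nat \<Rightarrow> nat)" where
  "tableau_below T = (\<lambda>x. if T x \<le> m then T x else 0)"

definition tableau_extend :: "(nat \<Rightarrow> nat) \<Rightarrow> (nat \<times> nat \<Rightarrow> nat) \<Rightarrow> (nat \<times> nat \<Rightarrow> nat)" where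
  "tableau_extend f S = (\<lambda>x. if x \<in> skew_cells (map f [0..<m]) [] then S x
                  else if x \<in> skew_cells lam [] then Suc m else 0)"

lemma ssyt_last_row_top:
  assumes T: "T \<in> ssyt lam [] (Suc m)" and x: "(m, c) \<in> skew_cells lam []"
  shows "T (m, c) = Suc m"
  using ssyt_straight_entry_lower[OF T dec x] ssytD(1)[OF T x] by simp

lemma tableau_below_cells:
  assumes T: "T \<in> ssyt lam [] (Suc m)"
  shows "x \<in> skew_cells (map (sub_shape T lam m) [0..<m]) [] \<longleftrightarrow> x \<in> skew_cells lam [] \<and> T x \<le> m"
proof (cases x)
  case (Pair i c)
  show ?thesis
  proof (cases "i < m")
    case True
    thus ?thesis using Pair sub_shape_iff[OF T, of i c] sub_shape_interlaces[OF T True] len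
      by (auto simp: skew_cells_map_upt skew_cells_straight)
  next
    case False
    show ?thesis
    proof (cases "i = m")
      case True
      thus ?thesis using Pair ssyt_last_row_top[OF T] by (auto simp: skew_cells_map_upt)
    next
      case False
      thus ?thesis using Pair \<open>\<not> i < m\<close> len by (auto simp: skew_cells_map_upt skew_cells_straight)
    qed
  qed
qed

lemma tableau_below_ssyt:
  assumes T: "T \<in> ssyt lam [] (Suc m)" and f: "f = map (sub_shape T lam m) [0..<m]"
  shows "tableau_below T \<in> ssyt f [] m"
proof (rule ssytI)
  fix x assume "x \<in> skew_cells f []"
  hence x: "x \<in> skew_cells lam []" "T x \<le> m" using tableau_below_cells[OF T] f by auto
  thus "tableau_below T x \<in> {1..m}" using ssytD(1)[OF T x(1)] by (auto simp: tableau_below_def)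
next
  fix x assume "x \<notin> skew_cells f []"
  hence "x \<notin> skew_cells lam [] \<or> \<not> T x \<le> m" using tableau_below_cells[OF T] f by auto
  thus "tableau_below T x = 0" using ssytD(2)[OF T, of x] by (auto simp: tableau_below_def)
next
  fix i c assume "(i, c) \<in> skew_cells f []" "(i, c + 1) \<in> skew_cells f []"
  thus "tableau_below T (i, c) \<le> tableau_below T (i, c + 1)" using tableau_below_cells[OF T] f ssytD(3)[OF T]
    by (auto simp: tableau_below_def)
next
  fix i c assume "(i, c) \<in> skew_cells f []" "(i + 1, c) \<in> skew_cells f []"
  thus "tableau_below T (i, c) < tableau_below T (i + 1, c)" using tableau_below_cells[OF T] f ssytD(4)[OF T]
    by (auto simp: tableau_below_def)
qed

lemma tableau_extend_ssyt:
  assumes f: "f \<in> PiE {0..<m} (\<lambda>a. {lam ! Suc a..lam ! a})" and S: "S \<in> ssyt (map f [0..<m]) [] m"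
  shows "tableau_extend f S \<in> ssyt lam [] (Suc m)"
proof -
  have fb: "lam ! Suc a \<le> f a" "f a \<le> lam ! a" if "a < m" for a using f that by auto
  have sub: "x \<in> skew_cells (map f [0..<m]) [] \<Longrightarrow> x \<in> skew_cells lam []" for x
    using fb len by (cases x) (auto simp: skew_cells_map_upt skew_cells_straight intro: order_trans)
  show ?thesis
  proof (rule ssytI)
    fix x assume x: "x \<in> skew_cells lam []"
    show "tableau_extend f S x \<in> {1..Suc m}" using ssytD(1)[OF S, of x] x by (auto simp: tableau_extend_def)
  next
    fix x assume "x \<notin> skew_cells lam []"
    thus "tableau_extend f S x = 0" using sub[of x] by (auto simp: tableau_extend_def)
  next
    fix i c assume a: "(i, c) \<in> skew_cells lam []" "(i, c + 1) \<in> skew_cells lam []"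
    show "tableau_extend f S (i, c) \<le> tableau_extend f S (i, c + 1)"
    proof (cases "(i, c + 1) \<in> skew_cells (map f [0..<m]) []")
      case True
      hence "(i, c) \<in> skew_cells (map f [0..<m]) []" using a by (auto simp: skew_cells_map_upt skew_cells_straight)
      thus ?thesis using True ssytD(3)[OF S] by (auto simp: tableau_extend_def)
    qed (use a ssytD(1)[OF S, of "(i, c)"] in \<open>auto simp: tableau_extend_def\<close>)
  next
    fix i c assume a: "(i, c) \<in> skew_cells lam []" "(i + 1, c) \<in> skew_cells lam []"
    hence c0: "(i, c) \<in> skew_cells (map f [0..<m]) []"
      using len fb[of i] by (auto simp: skew_cells_map_upt skew_cells_straight)
    thus "tableau_extend f S (i, c) < tableau_extend f S (i + 1, c)"
      using a ssytD(1)[OF S c0] ssytD(4)[OF S c0] by (auto simp: tableau_extend_def)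
  qed
qed

lemma sub_shape_tableau_extend:
  assumes f: "f \<in> PiE {0..<m} (\<lambda>a. {lam ! Suc a..lam ! a})" and S: "S \<in> ssyt (map f [0..<m]) [] m"
  shows "restrict (sub_shape (tableau_extend f S) lam m) {0..<m} = f"
proof (rule ext)
  fix a
  show "restrict (sub_shape (tableau_extend f S) lam m) {0..<m} a = f a"
  proof (cases "a < m")
    case False thus ?thesis using f by (auto simp: PiE_def extensional_def)
  next
    case True
    have fa: "f a \<le> lam ! a" using f True by auto
    have "sub_shape (tableau_extend f S) lam m a = f a"
      unfolding sub_shape_def
    proof (rule run_length_eqI[OF fa])
      fix c assume c: "1 \<le> c" "c \<le> lam ! a"
      show "tableau_extend f S (a, c) \<le> m \<longleftrightarrow> c \<le> f a"
        using c True len ssytD(1)[OF S, of "(a, c)"]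
        by (auto simp: tableau_extend_def skew_cells_map_upt skew_cells_straight)
    qed
    thus ?thesis using True by simp
  qed
qed

lemma tableau_below_extend:
  assumes S: "S \<in> ssyt (map f [0..<m]) [] m"
  shows "tableau_below (tableau_extend f S) = S"
proof
  fix x show "tableau_below (tableau_extend f S) x = S x"
    using ssytD(1,2)[OF S, of x] by (auto simp: tableau_below_def tableau_extend_def)
qed

lemma extend_tableau_below:
  assumes T: "T \<in> ssyt lam [] (Suc m)" and f: "f = restrict (sub_shape T lam m) {0..<m}"
  shows "tableau_extend f (tableau_below T) = T"
proof
  fix x
  have mf: "map f [0..<m] = map (sub_shape T lam m) [0..<m]" using f by simp
  show "tableau_extend f (tableau_below T) x = T x"
    using tableau_below_cells[OF T, of x] ssytD(1,2)[OF T, of x]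
    by (auto simp: tableau_below_def tableau_extend_def mf)
qed

text \<open>The entries \<open>Suc m\<close> of a tableau form a horizontal strip; removing them leaves a
  tableau whose shape interlaces with the original one.\<close>
lemma card_ssyt_branching:
  "card (ssyt lam [] (Suc m)) =
     (\<Sum>f \<in> PiE {0..<m} (\<lambda>a. {lam ! Suc a..lam ! a}). card (ssyt (map f [0..<m]) [] m))"
proof -
  define F where "F = PiE {0..<m} (\<lambda>a. {lam ! Suc a..lam ! a})"
  define S where "S = ssyt lam [] (Suc m)"
  define \<phi> where "\<phi> T = restrict (sub_shape T lam m) {0..<m}" for T
  have finF: "finite F" unfolding F_def by (intro finite_PiE) auto
  have img: "\<phi> ` S \<subseteq> F"
    using sub_shape_interlaces unfolding F_def S_def \<phi>_def by auto
  have "card S = (\<Sum>x\<in>S. 1)" by simp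
  also have "\<dots> = (\<Sum>f\<in>F. \<Sum>x\<in>{T \<in> S. \<phi> T = f}. 1)"
    by (rule sum.group[symmetric]) (use finite_ssyt finF img in \<open>auto simp: S_def\<close>)
  also have "\<dots> = (\<Sum>f\<in>F. card {T \<in> S. \<phi> T = f})" by simp
  also have "\<dots> = (\<Sum>f\<in>F. card (ssyt (map f [0..<m]) [] m))"
  proof (rule sum.cong[OF refl])
    fix f assume f: "f \<in> F"
    have "bij_betw tableau_below {T \<in> S. \<phi> T = f} (ssyt (map f [0..<m]) [] m)"
    proof (rule bij_betwI[where g="tableau_extend f"])
      show "tableau_below \<in> {T \<in> S. \<phi> T = f} \<rightarrow> ssyt (map f [0..<m]) [] m"
        using tableau_below_ssyt unfolding S_def \<phi>_def by (auto simp: map_restrict_upt)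
      show "tableau_extend f \<in> ssyt (map f [0..<m]) [] m \<rightarrow> {T \<in> S. \<phi> T = f}"
        using tableau_extend_ssyt sub_shape_tableau_extend f unfolding S_def \<phi>_def F_def by auto
      show "tableau_extend f (tableau_below T) = T" if "T \<in> {T \<in> S. \<phi> T = f}" for T
        using extend_tableau_below that unfolding S_def \<phi>_def by auto
      show "tableau_below (tableau_extend f S') = S'" if "S' \<in> ssyt (map f [0..<m]) [] m" for S'
        using tableau_below_extend that by auto
    qed
    thus "card {T \<in> S. \<phi> T = f} = card (ssyt (map f [0..<m]) [] m)"
      by (rule bij_betw_same_card)
  qed
  finally show ?thesis by (simp add: S_def F_def)
qed

end

lemma ssyt_empty: "ssyt [] [] 0 = {\<lambda>_. 0}"
  by (auto simp: ssyt_def skew_cells_def)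

theorem card_ssyt_straight_det:
  assumes "length lam = n" "\<And>i. Suc i < length lam \<Longrightarrow> lam ! Suc i \<le> lam ! i"
  shows "real (card (ssyt lam [] n)) =
         det (mat n n (\<lambda>(a, b). (real (lam ! a) + real n - 1 - real a) gchoose (n - 1 - b)))"
  using assms
proof (induction n arbitrary: lam)
  case 0
  hence "lam = []" by simp
  thus ?case by (simp add: ssyt_empty det_dim_zero[of _])
next
  case (Suc m)
  define F where "F = PiE {0..<m} (\<lambda>a. {lam ! Suc a..lam ! a})"
  have "real (card (ssyt lam [] (Suc m))) = (\<Sum>f\<in>F. real (card (ssyt (map f [0..<m]) [] m)))"
    using card_ssyt_branching[OF Suc.prems] by (simp add: F_def)
  also have "\<dots> = (\<Sum>f\<in>F. det (mat m m (\<lambda>(a, b). (real (f a) + real m - 1 - real a) gchoose (m - 1 - b))))"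
  proof (rule sum.cong[OF refl])
    fix f assume f: "f \<in> F"
    have dec: "map f [0..<m] ! Suc i \<le> map f [0..<m] ! i" if "Suc i < length (map f [0..<m])" for i
    proof -
      have "f (Suc i) \<le> lam ! Suc i" "lam ! Suc i \<le> f i" using f that by (auto simp: F_def)
      thus ?thesis using that by simp
    qed
    have "real (card (ssyt (map f [0..<m]) [] m)) =
       det (mat m m (\<lambda>(a, b). (real (map f [0..<m] ! a) + real m - 1 - real a) gchoose (m - 1 - b)))"
      by (rule Suc.IH) (use dec in auto)
    also have "mat m m (\<lambda>(a, b). (real (map f [0..<m] ! a) + real m - 1 - real a) gchoose (m - 1 - b))
             = mat m m (\<lambda>(a, b). (real (f a) + real m - 1 - real a) gchoose (m - 1 - b))"
      by (rule eq_matI) auto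
    finally show "real (card (ssyt (map f [0..<m]) [] m)) =
       det (mat m m (\<lambda>(a, b). (real (f a) + real m - 1 - real a) gchoose (m - 1 - b)))" .
  qed
  also have "\<dots> = det (mat (Suc m) (Suc m) (\<lambda>(a, b). (real (lam ! a) + real m - real a) gchoose (m - b)))"
    unfolding F_def by (rule sum_interlacing_det_gchoose) (use Suc.prems in auto)
  finally show ?case by (simp add: algebra_simps)
qed

section \<open>Rectangles and single rows\<close>

lemma skew_cells_pad_zeros: "skew_cells (lam @ replicate k 0) [] = skew_cells lam []"
  by (auto simp: skew_cells_def part_def nth_append split: if_splits)

lemma ssyt_pad_zeros: "ssyt (lam @ replicate k 0) [] M = ssyt lam [] M"
  unfolding ssyt_def skew_cells_pad_zeros ..

lemma prod_diff_eq_fact: "(\<Prod>a\<in>{d..<b}. real b - real a) = fact (b - d)"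
proof -
  have "(\<Prod>a\<in>{d..<b}. real b - real a) = (\<Prod>i\<in>{1..b - d}. real i)"
    by (rule prod.reindex_bij_witness[where i="\<lambda>i. b - i" and j="\<lambda>a. b - a"]) auto
  thus ?thesis by (simp add: fact_prod)
qed

definition rect_cross_prod :: "nat \<Rightarrow> nat \<Rightarrow> nat \<Rightarrow> real" where
  "rect_cross_prod d M N = (\<Prod>b\<in>{d..<M}. \<Prod>a<d. real N + real b - real a)"

lemma vandermonde_prod_rect_points:
  assumes dM: "d \<le> M" and x: "\<And>a. a < M \<Longrightarrow> x a = (if a < d then real N else 0) + real M - 1 - real a"
  shows "vandermonde_prod M x = barnesG_nat (Suc d) * barnesG_nat (Suc (M - d)) * rect_cross_prod d M N"
proof -
  have split: "{..<b} = {..<d} \<union> {d..<b}" if "d \<le> b" for b using that by auto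
  have "vandermonde_prod M x = (\<Prod>b<d. \<Prod>a<b. x a - x b) * (\<Prod>b\<in>{d..<M}. \<Prod>a<b. x a - x b)"
    unfolding vandermonde_prod_def split[OF dM] by (rule prod.union_disjoint) auto
  also have "(\<Prod>b<d. \<Prod>a<b. x a - x b) = (\<Prod>b<d. fact b)"
  proof (rule prod.cong[OF refl])
    fix b assume b: "b \<in> {..<d}"
    have "(\<Prod>a<b. x a - x b) = (\<Prod>a\<in>{0..<b}. real b - real a)"
      using b dM by (auto simp: x atLeast0LessThan intro!: prod.cong)
    thus "(\<Prod>a<b. x a - x b) = fact b" by (simp add: prod_diff_eq_fact)
  qed
  also have "(\<Prod>b\<in>{d..<M}. \<Prod>a<b. x a - x b) =
      (\<Prod>b\<in>{d..<M}. fact (b - d) * (\<Prod>a<d. real N + real b - real a))"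
  proof (rule prod.cong[OF refl])
    fix b assume b: "b \<in> {d..<M}"
    have "(\<Prod>a<b. x a - x b) = (\<Prod>a<d. x a - x b) * (\<Prod>a\<in>{d..<b}. x a - x b)"
      using b by (subst split) (auto intro: prod.union_disjoint)
    also have "(\<Prod>a<d. x a - x b) = (\<Prod>a<d. real N + real b - real a)"
      using b dM by (intro prod.cong) (auto simp: x)
    also have "(\<Prod>a\<in>{d..<b}. x a - x b) = fact (b - d)"
      using b by (auto simp: x prod_diff_eq_fact[symmetric] intro!: prod.cong)
    finally show "(\<Prod>a<b. x a - x b) = fact (b - d) * (\<Prod>a<d. real N + real b - real a)"
      by simp
  qed
  also have "\<dots> = (\<Prod>b\<in>{d..<M}. fact (b - d)) * rect_cross_prod d M N"
    by (simp add: prod.distrib rect_cross_prod_def)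
  also have "(\<Prod>b\<in>{d..<M}. fact (b - d) :: real) = (\<Prod>b<M - d. fact b)"
    by (rule prod.reindex_bij_witness[where i="\<lambda>b. b + d" and j="\<lambda>b. b - d"]) (use dM in auto)
  finally show ?thesis by (simp add: barnesG_nat_Suc)
qed

text \<open>Padding the rectangle with \<open>M - d\<close> empty rows turns the determinant into a
  Vandermonde determinant in the points \<open>N + M - 1 - a\<close> (\<open>a < d\<close>) and \<open>M - 1 - a\<close>
  (\<open>d \<le> a < M\<close>); only the differences between the two groups depend on \<open>N\<close>.\<close>
lemma card_ssyt_rectangle:
  assumes "d \<le> M"
  shows "real (card (ssyt (replicate d N) [] M)) =
         barnesG_nat (d + 1) * barnesG_nat (M - d + 1) / barnesG_nat (M + 1) * rect_cross_prod d M N"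
proof -
  define lam where "lam = replicate d N @ replicate (M - d) 0"
  have len: "length lam = M" using assms by (simp add: lam_def)
  have dec: "lam ! Suc i \<le> lam ! i" if "Suc i < length lam" for i
    using that by (auto simp: lam_def nth_append)
  define x where "x a = real (lam ! a) + real M - 1 - real a" for a
  have x: "x a = (if a < d then real N else 0) + real M - 1 - real a" if "a < M" for a
    using that by (simp add: x_def lam_def nth_append)
  have "real (card (ssyt (replicate d N) [] M)) = real (card (ssyt lam [] M))"
    by (simp add: lam_def ssyt_pad_zeros)
  also have "\<dots> = det (mat M M (\<lambda>(a, b). x a gchoose (M - 1 - b)))"
    unfolding x_def by (rule card_ssyt_straight_det[OF len dec])
  also have "\<dots> = vandermonde_prod M x / barnesG_nat (Suc M)"
    by (rule det_gchoose_vandermonde)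
  finally show ?thesis by (simp add: vandermonde_prod_rect_points[OF assms x])
qed

lemma asymp_equiv_prod:
  fixes f g :: "'i \<Rightarrow> 'a \<Rightarrow> real"
  assumes "finite A" "\<And>i. i \<in> A \<Longrightarrow> f i \<sim>[F] g i"
  shows "(\<lambda>x. \<Prod>i\<in>A. f i x) \<sim>[F] (\<lambda>x. \<Prod>i\<in>A. g i x)"
  using assms by (induction A rule: finite_induct) (auto intro!: asymp_equiv_mult)

lemma rect_cross_prod_shift_asymp:
  "(\<lambda>N. rect_cross_prod d M (N - t)) \<sim>[at_top] (\<lambda>N. real N ^ (d * (M - d)))"
proof -
  have "(\<lambda>N. rect_cross_prod d M (N - t)) \<sim>[at_top] (\<lambda>N. \<Prod>b\<in>{d..<M}. \<Prod>a<d. real N)"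
    unfolding rect_cross_prod_def
  proof (intro asymp_equiv_prod)
    fix b a :: nat
    have "(\<lambda>N. real N - real t + real b - real a) \<sim>[at_top] (\<lambda>N. real N)" by real_asymp
    moreover have "eventually (\<lambda>N. real N - real t + real b - real a = real (N - t) + real b - real a) at_top"
      using eventually_ge_at_top[of t] by eventually_elim simp
    ultimately show "(\<lambda>N. real (N - t) + real b - real a) \<sim>[at_top] (\<lambda>N. real N)"
      by (rule asymp_equiv_transfer) simp
  qed auto
  also have "(\<lambda>N. \<Prod>b\<in>{d..<M}. \<Prod>a<d. real N) = (\<lambda>N. real N ^ (d * (M - d)))"
    by (simp add: power_mult mult.commute)
  finally show ?thesis .
qed

lemma card_ssyt_rectangle_shift_asymp:
  assumes "d \<le> M"
  shows "(\<lambda>N. real (card (ssyt (replicate d (N - t)) [] M))) \<sim>[at_top]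
         (\<lambda>N. barnesG_nat (d + 1) * barnesG_nat (M - d + 1) / barnesG_nat (M + 1) * real N ^ (d * (M - d)))"
  unfolding card_ssyt_rectangle[OF assms]
  by (intro asymp_equiv_mult asymp_equiv_refl rect_cross_prod_shift_asymp)

lemma skew_cells_rect: "(i, c) \<in> skew_cells (replicate d n) [] \<longleftrightarrow> i < d \<and> 0 < c \<and> c \<le> n"
  by (auto simp: skew_cells_straight)

lemma rect_entry_lower:
  assumes "b \<in> ssyt (replicate d n) [] M" "(i, c) \<in> skew_cells (replicate d n) []"
  shows "Suc i \<le> b (i, c)"
  by (rule ssyt_straight_entry_lower[OF assms(1) _ assms(2)]) simp

definition min_first_col :: "nat \<Rightarrow> (nat \<times> nat \<Rightarrow> nat) set" where
  "min_first_col d = {b. \<forall>i<d. b (i, 1) = Suc i}"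

definition prepend_min_col :: "nat \<Rightarrow> (nat \<times> nat \<Rightarrow> nat) \<Rightarrow> (nat \<times> nat \<Rightarrow> nat)" where
  "prepend_min_col d b = (\<lambda>(i, c). if c = 1 \<and> i < d then Suc i else if 2 \<le> c then b (i, c - 1) else 0)"

lemma prepend_min_col_ssyt:
  assumes dM: "d \<le> M" and b: "b \<in> ssyt (replicate d n) [] M"
  shows "prepend_min_col d b \<in> ssyt (replicate d (Suc n)) [] M"
proof -
  have cells: "(i, c) \<in> skew_cells (replicate d (Suc n)) [] \<longleftrightarrow>
      i < d \<and> (c = 1 \<or> 2 \<le> c \<and> (i, c - 1) \<in> skew_cells (replicate d n) [])" for i c
    by (auto simp: skew_cells_rect)
  have P1: "prepend_min_col d b (i, Suc 0) = Suc i" if "i < d" for i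
    using that by (simp add: prepend_min_col_def)
  have P2: "prepend_min_col d b (i, c) = b (i, c - 1)" if "2 \<le> c" for i c
    using that by (simp add: prepend_min_col_def)
  show ?thesis
  proof (rule ssytI)
    fix x :: "nat \<times> nat" obtain i c where x: "x = (i, c)" by force
    show "x \<in> skew_cells (replicate d (Suc n)) [] \<Longrightarrow> prepend_min_col d b x \<in> {1..M}"
      using ssytD(1)[OF b, of "(i, c - 1)"] dM by (auto simp: x cells P1 P2)
  next
    fix x :: "nat \<times> nat" obtain i c where x: "x = (i, c)" by force
    assume "x \<notin> skew_cells (replicate d (Suc n)) []"
    hence "\<not> (c = 1 \<and> i < d)" "2 \<le> c \<Longrightarrow> (i, c - 1) \<notin> skew_cells (replicate d n) []"
      by (auto simp: x cells skew_cells_rect)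
    thus "prepend_min_col d b x = 0" using ssytD(2)[OF b] by (auto simp: x prepend_min_col_def)
  next
    fix i c assume a: "(i, c) \<in> skew_cells (replicate d (Suc n)) []"
      "(i, c + 1) \<in> skew_cells (replicate d (Suc n)) []"
    show "prepend_min_col d b (i, c) \<le> prepend_min_col d b (i, c + 1)"
    proof (cases "c = 1")
      case True
      thus ?thesis using a rect_entry_lower[OF b, of i 1] by (auto simp: cells P1 P2)
    next
      case False
      thus ?thesis using a ssytD(3)[OF b, of i "c - 1"] by (auto simp: cells P2)
    qed
  next
    fix i c assume "(i, c) \<in> skew_cells (replicate d (Suc n)) []"
      "(i + 1, c) \<in> skew_cells (replicate d (Suc n)) []"
    thus "prepend_min_col d b (i, c) < prepend_min_col d b (i + 1, c)"
      using ssytD(4)[OF b, of i "c - 1"] by (auto simp: cells P1 P2)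
  qed
qed

lemma inj_on_prepend_min_col: "inj_on (prepend_min_col d) (ssyt (replicate d n) [] M)"
proof (rule inj_onI)
  fix b b' assume b: "b \<in> ssyt (replicate d n) [] M" and b': "b' \<in> ssyt (replicate d n) [] M"
    and eq: "prepend_min_col d b = prepend_min_col d b'"
  show "b = b'"
  proof
    fix x :: "nat \<times> nat" obtain i c where x: "x = (i, c)" by force
    show "b x = b' x"
    proof (cases "c = 0")
      case True
      thus ?thesis using ssytD(2)[OF b, of x] ssytD(2)[OF b', of x] x by (simp add: skew_cells_rect)
    next
      case False
      thus ?thesis using fun_cong[OF eq, of "(i, c + 1)"] x by (simp add: prepend_min_col_def)
    qed
  qed
qed

lemma card_ssyt_rect_le_min_first_col:
  assumes "d \<le> M"
  shows "card (ssyt (replicate d n) [] M) \<le> card (ssyt (replicate d (Suc n)) [] M \<inter> min_first_col d)"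
proof -
  have "prepend_min_col d ` ssyt (replicate d n) [] M \<subseteq> ssyt (replicate d (Suc n)) [] M \<inter> min_first_col d"
    using prepend_min_col_ssyt[OF assms] by (auto simp: min_first_col_def prepend_min_col_def)
  from card_mono[OF _ this] show ?thesis
    by (simp add: card_image[OF inj_on_prepend_min_col] finite_ssyt)
qed

lemma card_ssyt_one_row:
  assumes "1 \<le> n \<or> s = 0"
  shows "card (ssyt [s] [] n) = (n + s - 1) choose s"
proof (cases "s = 0")
  case True
  have "skew_cells [s] [] = {}" using True by (auto simp: skew_cells_def part_def)
  hence "ssyt [s] [] n = {\<lambda>_. 0}" unfolding ssyt_def by (auto simp: fun_eq_iff)
  thus ?thesis using True by simp
next
  case False
  then obtain n' where n: "n = Suc n'" using assms by (cases n) auto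
  have "real (card (ssyt [s] [] n)) = rect_cross_prod 1 n s / fact (n - 1)"
    using card_ssyt_rectangle[of 1 n s] by (simp add: barnesG_nat_def n)
  also have "rect_cross_prod 1 n s = (\<Prod>b\<in>{1..<n}. real s + real b)"
    by (simp add: rect_cross_prod_def)
  also have "\<dots> = real (\<Prod>{s + 1..s + n - 1})"
    unfolding of_nat_prod
    by (rule prod.reindex_bij_witness[where i="\<lambda>i. i - s" and j="\<lambda>b. b + s"]) (use n in auto)
  also have "\<dots> = fact (s + n - 1) / fact s"
    using arg_cong[where f = real, OF fact_eq_fact_times[of s "s + n - 1"]] n
    by (simp add: field_simps of_nat_prod)
  also have "fact (s + n - 1) / fact s / fact (n - 1) = real ((n + s - 1) choose s)"
    using n by (simp add: binomial_fact add.commute)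
  finally show ?thesis by simp
qed

lemma skew_cells_one_row: "(i, c) \<in> skew_cells [s] [] \<longleftrightarrow> i = 0 \<and> 0 < c \<and> c \<le> s"
  by (auto simp: skew_cells_straight)

lemma card_ssyt_one_row_gchoose:
  assumes "1 \<le> n \<or> s = 0"
  shows "real (card (ssyt [s] [] n)) = (real n + real s - 1) gchoose s"
proof (cases "s = 0")
  case False
  hence "1 \<le> n" using assms by simp
  thus ?thesis using card_ssyt_one_row[OF assms] by (simp add: binomial_gbinomial of_nat_diff)
qed (use card_ssyt_one_row[OF assms] in simp)

section \<open>Splitting off the left block\<close>

lemma skew_cells_rect_plus_row:
  assumes "1 \<le> d"
  shows "(i, c) \<in> skew_cells (replicate d N @ [j]) [k] \<longleftrightarrow>
     (i < d \<and> (i = 0 \<longrightarrow> k < c) \<and> 0 < c \<and> c \<le> N) \<or> (i = d \<and> 0 < c \<and> c \<le> j)"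
  using assms by (auto simp: skew_cells_def part_def nth_append less_Suc_eq)

text \<open>Rows are numbered from \<open>0\<close>: in the shape \<open>(N^d, j)/(k)\<close> row \<open>0\<close> occupies
  columns \<open>k < c \<le> N\<close>, rows \<open>0 < i < d\<close> columns \<open>1, \<dots>, N\<close>, and row \<open>d\<close> columns
  \<open>1, \<dots>, j\<close>.\<close>
locale rect_plus_row =
  fixes d M j k :: nat
  assumes d1: "1 \<le> d" and dM: "d \<le> M"
begin

definition left_width :: nat where "left_width = max j k"

definition left_cells :: "(nat \<times> nat) set" where
  "left_cells = skew_cells (replicate d left_width @ [j]) [k]"

lemma left_cells_iff:
  "(i, c) \<in> left_cells \<longleftrightarrow>
     (i < d \<and> (i = 0 \<longrightarrow> k < c) \<and> 0 < c \<and> c \<le> left_width) \<or> (i = d \<and> 0 < c \<and> c \<le> j)"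
  unfolding left_cells_def by (rule skew_cells_rect_plus_row[OF d1])

abbreviation left_tab where "left_tab \<equiv> ssyt (replicate d left_width @ [j]) [k] M"
abbreviation skew_tab where "skew_tab N \<equiv> ssyt (replicate d N @ [j]) [k] M"
abbreviation rect_tab where "rect_tab n \<equiv> ssyt (replicate d n) [] M"

definition good_left :: "(nat \<times> nat \<Rightarrow> nat) set" where
  "good_left = {l \<in> left_tab. \<forall>i c. (i, c) \<in> left_cells \<and> i < d \<longrightarrow> l (i, c) \<le> Suc i}"

lemma good_left_eq:
  "good_left = {l. (\<forall>x\<in>left_cells. l x \<in> {1..M}) \<and> (\<forall>x. x \<notin> left_cells \<longrightarrow> l x = 0) \<and>
            (\<forall>i c. (i, c) \<in> left_cells \<and> (i, c + 1) \<in> left_cells \<longrightarrow> l (i, c) \<le> l (i, c + 1)) \<and>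
            (\<forall>i c. (i, c) \<in> left_cells \<and> (i + 1, c) \<in> left_cells \<longrightarrow> l (i, c) < l (i + 1, c)) \<and>
            (\<forall>i c. (i, c) \<in> left_cells \<and> i < d \<longrightarrow> l (i, c) \<le> Suc i)}"
  unfolding good_left_def ssyt_def left_cells_def[symmetric] by blast

definition left_fillings :: "(nat \<times> nat \<Rightarrow> nat) set" where
  "left_fillings = {l. (\<forall>x. x \<notin> left_cells \<longrightarrow> l x = 0) \<and> (\<forall>x. l x \<le> M)}"

definition left_part :: "(nat \<times> nat \<Rightarrow> nat) \<Rightarrow> (nat \<times> nat \<Rightarrow> nat)" where
  "left_part T = (\<lambda>(i, c). if c \<le> left_width then T (i, c) else 0)"

definition right_part :: "(nat \<times> nat \<Rightarrow> nat) \<Rightarrow> (nat \<times> nat \<Rightarrow> nat)" where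
  "right_part T = (\<lambda>(i, c). if 0 < c then T (i, c + left_width) else 0)"

definition glue :: "(nat \<times> nat \<Rightarrow> nat) \<Rightarrow> (nat \<times> nat \<Rightarrow> nat) \<Rightarrow> nat \<times> nat \<Rightarrow> nat" where
  "glue l b = (\<lambda>(i, c). if c \<le> left_width then l (i, c) else b (i, c - left_width))"

lemma good_left_imp_left_tab: "l \<in> good_left \<Longrightarrow> l \<in> left_tab"
  by (simp add: good_left_def)

lemma finite_left_fillings: "finite left_fillings"
  unfolding left_fillings_def left_cells_def by (rule finite_bounded_funs_supported_on[OF finite_skew_cells])

lemma left_tab_subset_fillings: "left_tab \<subseteq> left_fillings"
proof
  fix l assume l: "l \<in> left_tab"
  show "l \<in> left_fillings" unfolding left_fillings_def left_cells_def
  proof (intro CollectI conjI allI impI)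
    fix x
    show "x \<notin> skew_cells (replicate d left_width @ [j]) [k] \<Longrightarrow> l x = 0"
      by (rule ssytD(2)[OF l])
    show "l x \<le> M"
      using ssytD(1,2)[OF l, of x] by (cases "x \<in> skew_cells (replicate d left_width @ [j]) [k]") auto
  qed
qed

lemma finite_good_left: "finite good_left"
  using finite_subset[OF _ finite_left_fillings] left_tab_subset_fillings
  by (auto simp: good_left_def)

lemma shape_cells_left_iff:
  "left_width \<le> N \<Longrightarrow> c \<le> left_width \<Longrightarrow>
   (i, c) \<in> skew_cells (replicate d N @ [j]) [k] \<longleftrightarrow> (i, c) \<in> left_cells"
  unfolding skew_cells_rect_plus_row[OF d1] left_cells_iff left_width_def by auto

lemma shape_cells_right_iff:
  "left_width < c \<Longrightarrow>
   (i, c) \<in> skew_cells (replicate d N @ [j]) [k] \<longleftrightarrow>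
   (i, c - left_width) \<in> skew_cells (replicate d (N - left_width)) []"
  unfolding skew_cells_rect_plus_row[OF d1] skew_cells_rect left_width_def by auto

text \<open>Entries of row \<open>i\<close> of a rectangle tableau are at least \<open>i + 1\<close>, so a good left block
  can be glued to any rectangle tableau.\<close>
lemma good_left_le_rect_entry:
  assumes l: "l \<in> good_left" and b: "b \<in> rect_tab n"
    and x: "(i, c) \<in> left_cells" and y: "(i, c') \<in> skew_cells (replicate d n) []"
  shows "l (i, c) \<le> b (i, c')"
  using l x y rect_entry_lower[OF b y] by (force simp: good_left_def skew_cells_rect)

lemma glue_ssyt:
  assumes N: "left_width \<le> N" and l: "l \<in> good_left" and b: "b \<in> rect_tab (N - left_width)"
  shows "glue l b \<in> skew_tab N"
proof -
  note lD = ssytD[OF good_left_imp_left_tab[OF l], folded left_cells_def]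
  note L = shape_cells_left_iff[OF N] and R = shape_cells_right_iff[where N = N]
  have gl: "glue l b (i, c) = (if c \<le> left_width then l (i, c) else b (i, c - left_width))" for i c
    by (simp add: glue_def)
  show ?thesis
  proof (rule ssytI)
    fix x :: "nat \<times> nat" obtain i c where x: "x = (i, c)" by force
    show "x \<in> skew_cells (replicate d N @ [j]) [k] \<Longrightarrow> glue l b x \<in> {1..M}"
      using lD(1)[of x] ssytD(1)[OF b, of "(i, c - left_width)"] L[of c i] R[of c i] by (simp add: x gl)
    show "x \<notin> skew_cells (replicate d N @ [j]) [k] \<Longrightarrow> glue l b x = 0"
      using lD(2)[of x] ssytD(2)[OF b, of "(i, c - left_width)"] L[of c i] R[of c i] by (simp add: x gl)
  next
    fix i c assume a: "(i, c) \<in> skew_cells (replicate d N @ [j]) [k]"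
      "(i, c + 1) \<in> skew_cells (replicate d N @ [j]) [k]"
    consider "c + 1 \<le> left_width" | "c = left_width" | "left_width < c" by linarith
    thus "glue l b (i, c) \<le> glue l b (i, c + 1)"
    proof cases
      case 1
      thus ?thesis using a lD(3)[of i c] L[of c i] L[of "c + 1" i] by (simp add: gl)
    next
      case 2
      thus ?thesis using a good_left_le_rect_entry[OF l b, of i c 1] L[of c i] R[of "c + 1" i] by (simp add: gl)
    next
      case 3
      thus ?thesis using a ssytD(3)[OF b, of i "c - left_width"] R[of c i] R[of "c + 1" i]
        by (simp add: gl Suc_diff_le)
    qed
  next
    fix i c assume "(i, c) \<in> skew_cells (replicate d N @ [j]) [k]"
      "(i + 1, c) \<in> skew_cells (replicate d N @ [j]) [k]"
    thus "glue l b (i, c) < glue l b (i + 1, c)"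
      using lD(4)[of i c] ssytD(4)[OF b, of i "c - left_width"] L[of c i] L[of c "i + 1"]
        R[of c i] R[of c "i + 1"]
      by (cases "c \<le> left_width") (simp_all add: gl)
  qed
qed

lemma left_part_glue:
  assumes l: "l \<in> left_fillings" shows "left_part (glue l b) = l"
proof
  fix x :: "nat \<times> nat" obtain i c where x: "x = (i, c)" by force
  have "\<not> c \<le> left_width \<Longrightarrow> (i, c) \<notin> left_cells" by (auto simp: left_cells_iff left_width_def)
  hence "\<not> c \<le> left_width \<Longrightarrow> l (i, c) = 0" using l by (simp add: left_fillings_def)
  thus "left_part (glue l b) x = l x" by (simp add: x left_part_def glue_def)
qed

lemma right_part_glue:
  assumes b: "b \<in> rect_tab n" shows "right_part (glue l b) = b"
proof
  fix x :: "nat \<times> nat" obtain i c where x: "x = (i, c)" by force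
  have "b (i, 0) = 0" using ssytD(2)[OF b] by (simp add: skew_cells_rect)
  thus "right_part (glue l b) x = b x" by (simp add: x right_part_def glue_def)
qed

lemma glue_parts: "glue (left_part T) (right_part T) = T"
  by (auto simp: glue_def left_part_def right_part_def fun_eq_iff)

lemma left_part_ssyt:
  assumes N: "left_width \<le> N" and T: "T \<in> skew_tab N"
  shows "left_part T \<in> left_tab"
proof -
  have cells: "(i, c) \<in> left_cells \<longleftrightarrow> c \<le> left_width \<and> (i, c) \<in> skew_cells (replicate d N @ [j]) [k]"
    for i c
    using shape_cells_left_iff[OF N, of c i] by (auto simp: left_cells_iff left_width_def)
  show ?thesis
  proof (rule ssytI[of "replicate d left_width @ [j]" "[k]", folded left_cells_def])
    fix x show "x \<in> left_cells \<Longrightarrow> left_part T x \<in> {1..M}"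
      using ssytD(1)[OF T] cells by (cases x) (auto simp: left_part_def)
    show "x \<notin> left_cells \<Longrightarrow> left_part T x = 0"
      using ssytD(2)[OF T] cells by (cases x) (auto simp: left_part_def)
  next
    fix i c assume "(i, c) \<in> left_cells" "(i, c + 1) \<in> left_cells"
    thus "left_part T (i, c) \<le> left_part T (i, c + 1)"
      using ssytD(3)[OF T] cells by (auto simp: left_part_def)
  next
    fix i c assume "(i, c) \<in> left_cells" "(i + 1, c) \<in> left_cells"
    thus "left_part T (i, c) < left_part T (i + 1, c)"
      using ssytD(4)[OF T] cells by (auto simp: left_part_def)
  qed
qed

lemma right_part_ssyt:
  assumes T: "T \<in> skew_tab N"
  shows "right_part T \<in> rect_tab (N - left_width)"
proof -
  have cells: "(i, c) \<in> skew_cells (replicate d (N - left_width)) [] \<longleftrightarrow>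
      0 < c \<and> (i, c + left_width) \<in> skew_cells (replicate d N @ [j]) [k]" for i c
    using shape_cells_right_iff[of "c + left_width"] by (auto simp: skew_cells_rect)
  show ?thesis
  proof (rule ssytI)
  fix x show "x \<in> skew_cells (replicate d (N - left_width)) [] \<Longrightarrow> right_part T x \<in> {1..M}"
    using ssytD(1)[OF T] cells by (cases x) (auto simp: right_part_def)
  show "x \<notin> skew_cells (replicate d (N - left_width)) [] \<Longrightarrow> right_part T x = 0"
    using ssytD(2)[OF T] cells by (cases x) (auto simp: right_part_def)
next
  fix i c assume "(i, c) \<in> skew_cells (replicate d (N - left_width)) []"
    "(i, c + 1) \<in> skew_cells (replicate d (N - left_width)) []"
  thus "right_part T (i, c) \<le> right_part T (i, c + 1)"
    using ssytD(3)[OF T] cells by (auto simp: right_part_def add_ac)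
next
  fix i c assume "(i, c) \<in> skew_cells (replicate d (N - left_width)) []"
    "(i + 1, c) \<in> skew_cells (replicate d (N - left_width)) []"
  thus "right_part T (i, c) < right_part T (i + 1, c)"
    using ssytD(4)[OF T] cells by (auto simp: right_part_def)
  qed
qed

lemma left_part_good_or_not_min:
  assumes N: "left_width < N" and T: "T \<in> skew_tab N"
  shows "left_part T \<in> good_left \<or> right_part T \<notin> min_first_col d"
proof (rule disjCI)
  assume "\<not> right_part T \<notin> min_first_col d"
  hence min: "\<And>i. i < d \<Longrightarrow> T (i, Suc left_width) = Suc i"
    by (auto simp: min_first_col_def right_part_def)
  have "left_part T (i, c) \<le> Suc i" if a: "(i, c) \<in> left_cells" "i < d" for i c
  proof -
    have c: "(i, c) \<in> skew_cells (replicate d N @ [j]) [k]" "c \<le> left_width"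
      using a shape_cells_left_iff[of N c i] N by (auto simp: left_cells_iff)
    have "(i, Suc left_width) \<in> skew_cells (replicate d N @ [j]) [k]"
      using a N by (auto simp: skew_cells_rect_plus_row[OF d1] left_width_def)
    hence "T (i, c) \<le> T (i, Suc left_width)" using c by (intro ssyt_row_mono[OF T]) auto
    thus ?thesis using min a c by (simp add: left_part_def)
  qed
  thus "left_part T \<in> good_left"
    using left_part_ssyt[OF _ T] N by (auto simp: good_left_def)
qed

lemma card_good_left_rect_le:
  assumes N: "left_width < N"
  shows "card good_left * card (rect_tab (N - left_width)) \<le> card (skew_tab N)"
proof -
  let ?P = "good_left \<times> rect_tab (N - left_width)"
  have inj: "inj_on (\<lambda>(l, b). glue l b) ?P"
  proof (rule inj_on_inverseI)
    fix p assume "p \<in> ?P"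
    thus "(left_part (case p of (l, b) \<Rightarrow> glue l b), right_part (case p of (l, b) \<Rightarrow> glue l b)) = p"
      using left_part_glue right_part_glue good_left_imp_left_tab left_tab_subset_fillings by fastforce
  qed
  have "card good_left * card (rect_tab (N - left_width)) = card ((\<lambda>(l, b). glue l b) ` ?P)"
    by (simp add: card_cartesian_product card_image[OF inj])
  also have "\<dots> \<le> card (skew_tab N)"
    by (rule card_mono[OF finite_ssyt]) (use glue_ssyt N in auto)
  finally show ?thesis .
qed

lemma card_skew_tab_le:
  assumes N: "left_width < N"
  shows "card (skew_tab N) \<le> card good_left * card (rect_tab (N - left_width)) +
           card left_fillings * (card (rect_tab (N - left_width)) - card (rect_tab (N - left_width - 1)))"
proof -
  define n where "n = N - left_width"
  have n: "n = Suc (n - 1)" using N by (simp add: n_def)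
  define A where "A = (\<lambda>(l, b). glue l b) ` (good_left \<times> rect_tab n)"
  define B where "B = (\<lambda>(l, b). glue l b) ` (left_fillings \<times> (rect_tab n - min_first_col d))"
  have sub: "skew_tab N \<subseteq> A \<union> B"
  proof
    fix T assume T: "T \<in> skew_tab N"
    have eq: "T = (\<lambda>(l, b). glue l b) (left_part T, right_part T)" by (simp add: glue_parts)
    have bR: "right_part T \<in> rect_tab n" using right_part_ssyt[OF T] by (simp add: n_def)
    show "T \<in> A \<union> B"
    proof (cases "left_part T \<in> good_left")
      case True thus ?thesis using bR eq unfolding A_def by blast
    next
      case False
      hence "right_part T \<notin> min_first_col d" using left_part_good_or_not_min[OF N T] by simp
      moreover have "left_part T \<in> left_fillings" using left_part_ssyt[OF _ T] left_tab_subset_fillings N by auto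
      ultimately show ?thesis using bR eq unfolding B_def by blast
    qed
  qed
  have "card (skew_tab N) \<le> card (A \<union> B)"
    by (rule card_mono[OF _ sub]) (simp add: A_def B_def finite_good_left finite_left_fillings finite_ssyt)
  also have "\<dots> \<le> card A + card B" by (rule card_Un_le)
  also have "card A \<le> card good_left * card (rect_tab n)"
    unfolding A_def using card_image_le[of "good_left \<times> rect_tab n" "\<lambda>(l, b). glue l b"]
    by (simp add: card_cartesian_product finite_good_left finite_ssyt)
  also have "card B \<le> card left_fillings * card (rect_tab n - min_first_col d)"
    unfolding B_def using card_image_le[of "left_fillings \<times> (rect_tab n - min_first_col d)" "\<lambda>(l, b). glue l b"]
    by (simp add: card_cartesian_product finite_left_fillings finite_ssyt)
  also have "card (rect_tab n - min_first_col d) = card (rect_tab n) - card (rect_tab n \<inter> min_first_col d)"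
    by (rule card_Diff_subset_Int) (simp add: finite_ssyt)
  also have "\<dots> \<le> card (rect_tab n) - card (rect_tab (n - 1))"
    using card_ssyt_rect_le_min_first_col[OF dM, of "n - 1"] n by simp
  finally show ?thesis by (simp add: n_def mult_le_mono)
qed

end

section \<open>Counting good left blocks\<close>

context rect_plus_row
begin

text \<open>A good left block is determined by three data: the number \<open>r\<close> of entries equal
  to \<open>d\<close> in its last row (their columns carry the minimal entries \<open>1, \<dots>, d\<close>
  hence lie within the first \<open>k\<close> columns), the remaining entries of the last row
  shifted down by \<open>d\<close>, and, for each of the columns \<open>r < c \<le> k\<close>, the row at which
  its entries switch from \<open>i\<close> to \<open>i + 1\<close>, recorded as \<open>d + 1\<close> minus that row so that
  the record increases with \<open>c\<close>.\<close>
definition good_left_of ::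
    "nat \<Rightarrow> (nat \<times> nat \<Rightarrow> nat) \<Rightarrow> (nat \<times> nat \<Rightarrow> nat) \<Rightarrow> (nat \<times> nat \<Rightarrow> nat)" where
  "good_left_of r Q W = (\<lambda>(i, c). if (i, c) \<notin> left_cells then 0
     else if i = d then (if c \<le> r then d else W (0, c - r) + d)
     else if c \<le> k then (if c \<le> r then i else if i + Q (0, c - r) \<le> d then i else Suc i)
     else Suc i)"

definition good_left_params :: "(nat \<times> (nat \<times> nat \<Rightarrow> nat) \<times> (nat \<times> nat \<Rightarrow> nat)) set" where
  "good_left_params = Sigma {0..min j k} (\<lambda>r. ssyt [k - r] [] d \<times> ssyt [j - r] [] (M - d))"

context
  fixes l assumes l: "l \<in> good_left"
begin

lemma good_left_upper: "(i, c) \<in> left_cells \<Longrightarrow> i < d \<Longrightarrow> l (i, c) \<le> Suc i"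
  using l by (auto simp: good_left_def)

lemma good_left_range: "x \<in> left_cells \<Longrightarrow> l x \<in> {1..M}"
  using ssytD(1)[OF good_left_imp_left_tab[OF l]] by (simp add: left_cells_def)

lemma good_left_zero: "x \<notin> left_cells \<Longrightarrow> l x = 0"
  using ssytD(2)[OF good_left_imp_left_tab[OF l]] by (simp add: left_cells_def)

lemma good_left_row: "(i, c) \<in> left_cells \<Longrightarrow> (i, c + 1) \<in> left_cells \<Longrightarrow> l (i, c) \<le> l (i, c + 1)"
  using ssytD(3)[OF good_left_imp_left_tab[OF l]] by (simp add: left_cells_def)

lemma good_left_col: "(i, c) \<in> left_cells \<Longrightarrow> (Suc i, c) \<in> left_cells \<Longrightarrow> l (i, c) < l (Suc i, c)"
  using ssytD(4)[OF good_left_imp_left_tab[OF l]] by (simp add: left_cells_def)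

lemma good_left_row_mono:
  "(i, c) \<in> left_cells \<Longrightarrow> (i, c') \<in> left_cells \<Longrightarrow> c \<le> c' \<Longrightarrow> l (i, c) \<le> l (i, c')"
  using ssyt_row_mono[OF good_left_imp_left_tab[OF l]] by (simp add: left_cells_def)

lemma good_left_lower: "i < d \<Longrightarrow> (i, c) \<in> left_cells \<Longrightarrow> i \<le> l (i, c)"
proof (induction i)
  case (Suc i)
  show ?case
  proof (cases "(i, c) \<in> left_cells")
    case True
    thus ?thesis using Suc good_left_col[OF True Suc.prems(2)] by simp
  next
    case False
    hence "i = 0" using Suc.prems by (auto simp: left_cells_iff)
    thus ?thesis using good_left_range[OF Suc.prems(2)] by simp
  qed
qed simp

lemma good_left_lower_right: "i < d \<Longrightarrow> (i, c) \<in> left_cells \<Longrightarrow> k < c \<Longrightarrow> Suc i \<le> l (i, c)"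
proof (induction i)
  case 0 thus ?case using good_left_range[OF "0.prems"(2)] by simp
next
  case (Suc i)
  have "(i, c) \<in> left_cells" using Suc.prems by (auto simp: left_cells_iff)
  thus ?case using Suc good_left_col[OF \<open>(i, c) \<in> left_cells\<close> Suc.prems(2)] by simp
qed

lemma good_left_last_row_lower:
  assumes c: "0 < c" "c \<le> j"
  shows "d + (if k < c then 1 else 0) \<le> l (d, c)"
proof (cases "(d - 1, c) \<in> left_cells")
  case True
  have "(d, c) \<in> left_cells" using c by (auto simp: left_cells_iff)
  hence "l (d - 1, c) < l (d, c)" using good_left_col[OF True] d1 by simp
  moreover have "d - 1 + (if k < c then 1 else 0) \<le> l (d - 1, c)"
    using good_left_lower[OF _ True] good_left_lower_right[OF _ True] d1 by auto
  ultimately show ?thesis by simp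
next
  case False
  hence "d = 1" "c \<le> k" using c d1 by (auto simp: left_cells_iff left_width_def)
  moreover have "(d, c) \<in> left_cells" using c by (auto simp: left_cells_iff)
  ultimately show ?thesis using good_left_range by simp
qed

lemma good_left_low_column:
  assumes c: "0 < c" "c \<le> j" "c \<le> k" and ld: "l (d, c) \<le> d"
  shows "1 \<le> i \<Longrightarrow> i \<le> d \<Longrightarrow> l (i, c) \<le> i"
proof (induction "d - i" arbitrary: i)
  case 0 thus ?case using ld by simp
next
  case (Suc t)
  have i: "i < d" using Suc by simp
  have "(i, c) \<in> left_cells" "(Suc i, c) \<in> left_cells"
    using Suc.prems i c by (auto simp: left_cells_iff left_width_def)
  moreover have "l (Suc i, c) \<le> Suc i" using Suc.hyps(1)[of "Suc i"] Suc.hyps(2) Suc.prems i by simp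
  ultimately show ?case using good_left_col by fastforce
qed

end

definition low_run :: "(nat \<times> nat \<Rightarrow> nat) \<Rightarrow> nat" where
  "low_run l = run_length j (\<lambda>c. l (d, c) \<le> d)"

definition high_word :: "(nat \<times> nat \<Rightarrow> nat) \<Rightarrow> (nat \<times> nat \<Rightarrow> nat)" where
  "high_word l = (\<lambda>(i, c).
     if i = 0 \<and> 0 < c \<and> c \<le> j - low_run l then l (d, c + low_run l) - d else 0)"

definition switch_row :: "(nat \<times> nat \<Rightarrow> nat) \<Rightarrow> nat \<Rightarrow> nat" where
  "switch_row l c = Min (insert d {i. 1 \<le> i \<and> i < d \<and> l (i, c) = Suc i})"

definition switch_word :: "(nat \<times> nat \<Rightarrow> nat) \<Rightarrow> (nat \<times> nat \<Rightarrow> nat)" where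
  "switch_word l = (\<lambda>(i, c).
     if i = 0 \<and> 0 < c \<and> c \<le> k - low_run l then d + 1 - switch_row l (c + low_run l) else 0)"

context
  fixes l assumes l: "l \<in> good_left"
begin

lemma le_low_run_iff:
  assumes c: "1 \<le> c" "c \<le> j"
  shows "c \<le> low_run l \<longleftrightarrow> l (d, c) \<le> d"
  unfolding low_run_def
proof (rule le_run_length_iff[OF _ c])
  fix c c' assume "1 \<le> c" "c \<le> c'" "c' \<le> j" "l (d, c') \<le> d"
  moreover have "l (d, c) \<le> l (d, c')"
    using calculation by (intro good_left_row_mono[OF l]) (auto simp: left_cells_iff)
  ultimately show "l (d, c) \<le> d" by simp
qed

lemma low_run_le: "low_run l \<le> min j k"
proof -
  have j: "low_run l \<le> j" unfolding low_run_def by (rule run_length_le)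
  moreover have "low_run l \<le> k"
  proof (rule ccontr)
    assume "\<not> low_run l \<le> k"
    hence "l (d, low_run l) \<le> d" using le_low_run_iff[of "low_run l"] j by simp
    moreover have "Suc d \<le> l (d, low_run l)"
      using good_left_last_row_lower[OF l, of "low_run l"] j \<open>\<not> low_run l \<le> k\<close> by simp
    ultimately show False by simp
  qed
  ultimately show ?thesis by simp
qed

lemma switch_row_bounds: "1 \<le> switch_row l c" "switch_row l c \<le> d"
  using d1 by (auto simp: switch_row_def)

text \<open>Once \<open>l (i, c) = i + 1\<close>, strictness of the column and the bound \<open>i' + 1\<close> in each
  row \<open>i'\<close> force \<open>l (i', c) = i' + 1\<close> further down.\<close>
lemma good_left_switch:
  assumes c: "0 < c" "c \<le> k" and i: "1 \<le> i" "i < d"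
  shows "l (i, c) = (if i < switch_row l c then i else Suc i)"
proof -
  define S where "S = {i. 1 \<le> i \<and> i < d \<and> l (i, c) = Suc i}"
  have finS: "finite S" by (rule finite_subset[of _ "{..d}"]) (auto simp: S_def)
  have cells: "(i', c) \<in> left_cells" if "1 \<le> i'" "i' < d" for i'
    using c that by (auto simp: left_cells_iff left_width_def)
  have range: "i' \<le> l (i', c)" "l (i', c) \<le> Suc i'" if "1 \<le> i'" "i' < d" for i'
    using good_left_lower[OF l _ cells] good_left_upper[OF l cells] that by auto
  show ?thesis
  proof (cases "i < switch_row l c")
    case True
    have "i \<notin> S"
    proof
      assume "i \<in> S"
      hence "switch_row l c \<le> i" unfolding switch_row_def S_def[symmetric] using finS by simp
      thus False using True by simp
    qed
    thus ?thesis using True range[OF i] i by (auto simp: S_def)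
  next
    case False
    have "switch_row l c \<in> insert d S"
      unfolding switch_row_def S_def[symmetric] using finS by (intro Min_in) auto
    hence sS: "switch_row l c \<in> S" using False i by auto
    have "l (switch_row l c + t, c) = Suc (switch_row l c + t)" if "switch_row l c + t < d" for t
      using that
    proof (induction t)
      case 0 thus ?case using sS by (simp add: S_def)
    next
      case (Suc t)
      have "l (switch_row l c + t, c) < l (Suc (switch_row l c + t), c)"
        using Suc.prems sS by (intro good_left_col[OF l] cells) (auto simp: S_def)
      thus ?case using Suc range[of "Suc (switch_row l c + t)"] sS by (simp add: S_def)
    qed
    from this[of "i - switch_row l c"] False i show ?thesis by simp
  qed
qed

lemma high_word_ssyt: "high_word l \<in> ssyt [j - low_run l] [] (M - d)"
proof (rule ssytI)
  fix x :: "nat \<times> nat" obtain i c where x: "x = (i, c)" by force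
  assume "x \<in> skew_cells [j - low_run l] []"
  hence c: "i = 0" "0 < c" "c \<le> j - low_run l" "c + low_run l \<le> j"
    using low_run_le by (auto simp: x skew_cells_one_row)
  moreover have "(d, c + low_run l) \<in> left_cells" using c by (simp add: left_cells_iff)
  ultimately show "high_word l x \<in> {1..M - d}"
    using le_low_run_iff[of "c + low_run l"] good_left_range[OF l] by (force simp: x high_word_def)
next
  fix x :: "nat \<times> nat" obtain i c where x: "x = (i, c)" by force
  show "x \<notin> skew_cells [j - low_run l] [] \<Longrightarrow> high_word l x = 0"
    by (auto simp: x high_word_def skew_cells_one_row)
next
  fix i c assume a: "(i, c) \<in> skew_cells [j - low_run l] []" "(i, c + 1) \<in> skew_cells [j - low_run l] []"
  hence "l (d, c + low_run l) \<le> l (d, c + low_run l + 1)"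
    by (intro good_left_row[OF l]) (auto simp: skew_cells_one_row left_cells_iff)
  thus "high_word l (i, c) \<le> high_word l (i, c + 1)"
    using a by (auto simp: high_word_def skew_cells_one_row add_ac)
next
  fix i c assume "(i, c) \<in> skew_cells [j - low_run l] []" "(i + 1, c) \<in> skew_cells [j - low_run l] []"
  thus "high_word l (i, c) < high_word l (i + 1, c)" by (auto simp: skew_cells_one_row)
qed

lemma switch_row_antimono:
  assumes c: "0 < c" "c + 1 \<le> k"
  shows "switch_row l (c + 1) \<le> switch_row l c"
proof (cases "switch_row l c = d")
  case True thus ?thesis using switch_row_bounds by simp
next
  case False
  let ?s = "switch_row l c"
  have lt: "?s < d" using False switch_row_bounds(2)[of c] by simp
  have L: "(?s, c) \<in> left_cells" "(?s, c + 1) \<in> left_cells"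
    using c lt switch_row_bounds(1)[of c] by (auto simp: left_cells_iff left_width_def)
  have "Suc ?s \<le> l (?s, c + 1)"
    using good_left_switch[OF c(1) _ switch_row_bounds(1) lt] good_left_row[OF l L] c by simp
  hence "\<not> ?s < switch_row l (c + 1)"
    using good_left_switch[of "c + 1" ?s] c lt switch_row_bounds(1)[of c] by auto
  thus ?thesis by simp
qed

lemma switch_word_ssyt: "switch_word l \<in> ssyt [k - low_run l] [] d"
proof (rule ssytI)
  fix x :: "nat \<times> nat" obtain i c where x: "x = (i, c)" by force
  show "x \<in> skew_cells [k - low_run l] [] \<Longrightarrow> switch_word l x \<in> {1..d}"
    using switch_row_bounds[of "c + low_run l"] by (auto simp: x switch_word_def skew_cells_one_row)
  show "x \<notin> skew_cells [k - low_run l] [] \<Longrightarrow> switch_word l x = 0"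
    by (auto simp: x switch_word_def skew_cells_one_row)
next
  fix i c assume a: "(i, c) \<in> skew_cells [k - low_run l] []" "(i, c + 1) \<in> skew_cells [k - low_run l] []"
  hence "switch_row l (c + low_run l + 1) \<le> switch_row l (c + low_run l)"
    by (intro switch_row_antimono) (auto simp: skew_cells_one_row)
  thus "switch_word l (i, c) \<le> switch_word l (i, c + 1)"
    using a by (auto simp: switch_word_def skew_cells_one_row add_ac)
next
  fix i c assume "(i, c) \<in> skew_cells [k - low_run l] []" "(i + 1, c) \<in> skew_cells [k - low_run l] []"
  thus "switch_word l (i, c) < switch_word l (i + 1, c)" by (auto simp: skew_cells_one_row)
qed

lemma good_left_of_decode: "good_left_of (low_run l) (switch_word l) (high_word l) = l"
proof
  fix x :: "nat \<times> nat" obtain i c where x: "x = (i, c)" by force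
  let ?r = "low_run l" and ?l' = "good_left_of (low_run l) (switch_word l) (high_word l)"
  have r: "?r \<le> j" "?r \<le> k" using low_run_le by auto
  consider "(i, c) \<notin> left_cells" | "(i, c) \<in> left_cells" "i = d"
    | "(i, c) \<in> left_cells" "i < d" "k < c"
    | "(i, c) \<in> left_cells" "i < d" "c \<le> k" "c \<le> ?r"
    | "(i, c) \<in> left_cells" "i < d" "c \<le> k" "?r < c"
    using left_cells_iff by fastforce
  thus "?l' x = l x"
  proof cases
    case 1
    thus ?thesis using good_left_zero[OF l] by (simp add: x good_left_of_def)
  next
    case 2
    hence c: "0 < c" "c \<le> j" by (auto simp: left_cells_iff)
    thus ?thesis using 2 le_low_run_iff[OF _ c(2)] good_left_last_row_lower[OF l c] r
      by (auto simp: x good_left_of_def high_word_def)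
  next
    case 3
    thus ?thesis using good_left_lower_right[OF l] good_left_upper[OF l]
      by (fastforce simp: x good_left_of_def intro: antisym)
  next
    case 4
    hence c: "0 < c" "1 \<le> i" by (auto simp: left_cells_iff)
    have "l (d, c) \<le> d" using le_low_run_iff[of c] c 4 r by simp
    hence "l (i, c) \<le> i" using good_left_low_column[OF l, of c i] c 4 r by simp
    thus ?thesis using good_left_lower[OF l, of i c] 4 by (simp add: x good_left_of_def)
  next
    case 5
    hence c: "0 < c" "1 \<le> i" by (auto simp: left_cells_iff)
    have "switch_word l (0, c - ?r) = d + 1 - switch_row l c" using 5 by (simp add: switch_word_def)
    hence "?l' (i, c) = (if i < switch_row l c then i else Suc i)"
      using 5 switch_row_bounds[of c] by (auto simp: good_left_of_def)
    thus ?thesis using good_left_switch[OF c(1) 5(3) c(2) 5(2)] by (simp add: x)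
  qed
qed

end

context
  fixes r Q W
  assumes r: "r \<le> min j k" and Q: "Q \<in> ssyt [k - r] [] d" and W: "W \<in> ssyt [j - r] [] (M - d)"
begin

lemma param_high_range: "r < c \<Longrightarrow> c \<le> j \<Longrightarrow> 1 \<le> W (0, c - r) \<and> W (0, c - r) \<le> M - d"
  using ssytD(1)[OF W, of "(0, c - r)"] by (auto simp: skew_cells_one_row)

lemma param_switch_range: "r < c \<Longrightarrow> c \<le> k \<Longrightarrow> 1 \<le> Q (0, c - r) \<and> Q (0, c - r) \<le> d"
  using ssytD(1)[OF Q, of "(0, c - r)"] by (auto simp: skew_cells_one_row)

lemma param_high_mono: "r < c \<Longrightarrow> Suc c \<le> j \<Longrightarrow> W (0, c - r) \<le> W (0, Suc c - r)"
  using ssytD(3)[OF W, of 0 "c - r"] by (auto simp: skew_cells_one_row Suc_diff_le)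

lemma param_switch_mono: "r < c \<Longrightarrow> Suc c \<le> k \<Longrightarrow> Q (0, c - r) \<le> Q (0, Suc c - r)"
  using ssytD(3)[OF Q, of 0 "c - r"] by (auto simp: skew_cells_one_row Suc_diff_le)

lemma good_left_of_good: "good_left_of r Q W \<in> good_left"
  unfolding good_left_eq
proof (intro CollectI conjI ballI allI impI)
  fix x assume x: "x \<in> left_cells"
  obtain i c where xe: "x = (i, c)" by force
  show "good_left_of r Q W x \<in> {1..M}"
    using x param_high_range[of c] param_switch_range[of c] d1 dM
    by (cases "i = d") (auto simp: xe good_left_of_def left_cells_iff)
next
  fix x assume "x \<notin> left_cells"
  thus "good_left_of r Q W x = 0" by (cases x) (auto simp: good_left_of_def)
next
  fix i c assume "(i, c) \<in> left_cells \<and> (i, c + 1) \<in> left_cells"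
  thus "good_left_of r Q W (i, c) \<le> good_left_of r Q W (i, c + 1)"
    using param_high_mono[of c] param_switch_mono[of c] r
    by (cases "i = d"; cases "r < c") (auto simp: good_left_of_def left_cells_iff)
next
  fix i c assume "(i, c) \<in> left_cells \<and> (i + 1, c) \<in> left_cells"
  thus "good_left_of r Q W (i, c) < good_left_of r Q W (i + 1, c)"
    using param_high_range[of c] param_switch_range[of c] r
    by (cases "i + 1 = d") (auto simp: good_left_of_def left_cells_iff)
next
  fix i c assume "(i, c) \<in> left_cells \<and> i < d"
  thus "good_left_of r Q W (i, c) \<le> Suc i" by (auto simp: good_left_of_def left_cells_iff)
qed

lemma low_run_good_left_of: "low_run (good_left_of r Q W) = r"
  unfolding low_run_def
proof (rule run_length_eqI)
  fix c assume c: "1 \<le> c" "c \<le> j"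
  thus "good_left_of r Q W (d, c) \<le> d \<longleftrightarrow> c \<le> r"
    using param_high_range[of c] by (auto simp: good_left_of_def left_cells_iff)
qed (use r in simp)

lemma high_word_good_left_of: "high_word (good_left_of r Q W) = W"
proof
  fix x :: "nat \<times> nat" obtain i c where x: "x = (i, c)" by force
  have hw: "high_word (good_left_of r Q W) x =
      (if i = 0 \<and> 0 < c \<and> c \<le> j - r then good_left_of r Q W (d, c + r) - d else 0)"
    by (simp add: x high_word_def low_run_good_left_of)
  show "high_word (good_left_of r Q W) x = W x"
  proof (cases "x \<in> skew_cells [j - r] []")
    case True
    thus ?thesis unfolding hw by (auto simp: x good_left_of_def left_cells_iff skew_cells_one_row)
  next
    case False
    thus ?thesis unfolding hw using ssytD(2)[OF W] by (auto simp: x skew_cells_one_row)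
  qed
qed

lemma switch_row_good_left_of:
  assumes c: "r < c" "c \<le> k"
  shows "switch_row (good_left_of r Q W) c = d + 1 - Q (0, c - r)"
proof -
  define q where "q = Q (0, c - r)"
  have q: "1 \<le> q" "q \<le> d" using param_switch_range c by (auto simp: q_def)
  have "insert d {i. 1 \<le> i \<and> i < d \<and> good_left_of r Q W (i, c) = Suc i} = {d + 1 - q..d}"
    using c q by (auto simp: good_left_of_def left_cells_iff left_width_def q_def[symmetric])
  moreover have "Min {d + 1 - q..d} = d + 1 - q" using q by (intro Min_eqI) auto
  ultimately show ?thesis unfolding switch_row_def q_def[symmetric] by simp
qed

lemma switch_word_good_left_of: "switch_word (good_left_of r Q W) = Q"
proof
  fix x :: "nat \<times> nat" obtain i c where x: "x = (i, c)" by force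
  have sw: "switch_word (good_left_of r Q W) x =
      (if i = 0 \<and> 0 < c \<and> c \<le> k - r then d + 1 - switch_row (good_left_of r Q W) (c + r) else 0)"
    by (simp add: x switch_word_def low_run_good_left_of)
  show "switch_word (good_left_of r Q W) x = Q x"
  proof (cases "x \<in> skew_cells [k - r] []")
    case True
    thus ?thesis unfolding sw using ssytD(1)[OF Q True] switch_row_good_left_of[of "c + r"]
      by (auto simp: x skew_cells_one_row)
  next
    case False
    thus ?thesis unfolding sw using ssytD(2)[OF Q] by (auto simp: x skew_cells_one_row)
  qed
qed

end

lemma bij_betw_good_left_of: "bij_betw (\<lambda>(r, Q, W). good_left_of r Q W) good_left_params good_left"
proof (rule bij_betwI[where g = "\<lambda>l. (low_run l, switch_word l, high_word l)"])
  show "(\<lambda>(r, Q, W). good_left_of r Q W) \<in> good_left_params \<rightarrow> good_left"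
    using good_left_of_good by (auto simp: good_left_params_def)
  show "(\<lambda>l. (low_run l, switch_word l, high_word l)) \<in> good_left \<rightarrow> good_left_params"
    using low_run_le switch_word_ssyt high_word_ssyt by (auto simp: good_left_params_def)
  show "(\<lambda>l. (low_run l, switch_word l, high_word l)) ((\<lambda>(r, Q, W). good_left_of r Q W) p) = p"
    if "p \<in> good_left_params" for p
    using that low_run_good_left_of switch_word_good_left_of high_word_good_left_of
    by (auto simp: good_left_params_def)
  show "(\<lambda>(r, Q, W). good_left_of r Q W) (low_run l, switch_word l, high_word l) = l"
    if "l \<in> good_left" for l
    using good_left_of_decode[OF that] by simp
qed

lemma card_good_left:
  "card good_left = (\<Sum>r = 0..min j k. card (ssyt [k - r] [] d) * card (ssyt [j - r] [] (M - d)))"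
proof -
  have "card good_left = card good_left_params"
    by (rule bij_betw_same_card[OF bij_betw_good_left_of, symmetric])
  also have "\<dots> = (\<Sum>r = 0..min j k. card (ssyt [k - r] [] d \<times> ssyt [j - r] [] (M - d)))"
    unfolding good_left_params_def by (rule card_SigmaI) (auto simp: finite_ssyt)
  finally show ?thesis by (simp add: card_cartesian_product)
qed

end

section \<open>Asymptotics\<close>

lemma asymp_equiv_shift_sandwich:
  fixes f R g :: "nat \<Rightarrow> real"
  assumes c: "c \<noteq> 0" and R: "\<And>t. (\<lambda>N. R (N - t)) \<sim>[at_top] g"
    and bounds: "eventually (\<lambda>N. c * R (N - s) \<le> f N \<and>
                   f N \<le> c * R (N - s) + K * (R (N - s) - R (N - s - 1))) at_top"
  shows "f \<sim>[at_top] (\<lambda>N. c * g N)"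
proof -
  have A: "(\<lambda>N. R (N - s)) \<sim>[at_top] g" and B: "(\<lambda>N. R (N - s - 1)) \<sim>[at_top] g"
    using R[of s] R[of "s + 1"] by (simp_all add: diff_diff_add)
  have lower: "(\<lambda>N. c * R (N - s)) \<sim>[at_top] (\<lambda>N. c * g N)"
    by (intro asymp_equiv_intros A)
  have "(\<lambda>N. (R (N - s) - g N) - (R (N - s - 1) - g N)) \<in> o[at_top](g)"
    by (rule sum_in_smallo(2)[OF asymp_equiv_imp_diff_smallo[OF A] asymp_equiv_imp_diff_smallo[OF B]])
  hence small: "(\<lambda>N. K * (R (N - s) - R (N - s - 1))) \<in> o[at_top](\<lambda>N. c * g N)"
    using c by (cases "K = 0") simp_all
  have upper: "(\<lambda>N. c * R (N - s) + K * (R (N - s) - R (N - s - 1))) \<sim>[at_top] (\<lambda>N. c * g N)"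
    unfolding asymp_equiv_add_right[OF small] by (rule lower)
  show ?thesis
    by (rule asymp_equiv_sandwich_real[OF lower upper]) (use bounds in \<open>auto elim: eventually_mono\<close>)
qed

context rect_plus_row
begin

lemma card_skew_tab_sandwich:
  defines "R \<equiv> \<lambda>n. real (card (rect_tab n))"
  shows "eventually (\<lambda>N. real (card good_left) * R (N - left_width) \<le> real (card (skew_tab N)) \<and>
           real (card (skew_tab N)) \<le> real (card good_left) * R (N - left_width) +
             real (card left_fillings) * (R (N - left_width) - R (N - left_width - 1))) at_top"
  using eventually_gt_at_top[of left_width]
proof eventually_elim
  case (elim N)
  have "card (rect_tab (N - left_width - 1)) \<le> card (rect_tab (N - left_width) \<inter> min_first_col d)"
    using card_ssyt_rect_le_min_first_col[OF dM, of "N - left_width - 1"] elim by (simp add: Suc_diff_Suc)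
  also have "\<dots> \<le> card (rect_tab (N - left_width))" by (rule card_mono[OF finite_ssyt]) auto
  finally have mono: "card (rect_tab (N - left_width - 1)) \<le> card (rect_tab (N - left_width))" .
  show ?case
    using card_good_left_rect_le[OF elim] card_skew_tab_le[OF elim]
    unfolding R_def of_nat_diff[OF mono, symmetric] of_nat_mult[symmetric] of_nat_add[symmetric] of_nat_le_iff
    by simp
qed

lemma card_good_left_pos:
  assumes "d < M \<or> j = 0"
  shows "0 < card good_left"
proof -
  have "1 \<le> M - d \<or> j = 0" using assms by auto
  hence "0 < card (ssyt [k] [] d) * card (ssyt [j] [] (M - d))"
    using d1 by (auto simp: card_ssyt_one_row)
  also have "\<dots> \<le> card good_left"
    unfolding card_good_left
    using member_le_sum[of 0 "{0..min j k}" "\<lambda>r. card (ssyt [k - r] [] d) * card (ssyt [j - r] [] (M - d))"]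
    by simp
  finally show ?thesis .
qed

lemma real_card_good_left:
  assumes "d < M \<or> j = 0"
  shows "real (card good_left) = (\<Sum>r = 0..min j k.
           ((real M - real d + real j - real r - 1) gchoose (j - r)) *
           ((real d + real k - real r - 1) gchoose (k - r)))"
  unfolding card_good_left of_nat_sum of_nat_mult
proof (rule sum.cong[OF refl])
  fix r assume r: "r \<in> {0..min j k}"
  have "real (card (ssyt [k - r] [] d)) = (real d + real k - real r - 1) gchoose (k - r)"
    using card_ssyt_one_row_gchoose[of d "k - r"] d1 r by (simp add: of_nat_diff add_diff_eq)
  moreover have "1 \<le> M - d \<or> j - r = 0" using assms by auto
  hence "real (card (ssyt [j - r] [] (M - d))) = (real M - real d + real j - real r - 1) gchoose (j - r)"
    using card_ssyt_one_row_gchoose dM r by (simp add: of_nat_diff add_diff_eq)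
  ultimately show "real (card (ssyt [k - r] [] d)) * real (card (ssyt [j - r] [] (M - d))) =
      ((real M - real d + real j - real r - 1) gchoose (j - r)) *
      ((real d + real k - real r - 1) gchoose (k - r))"
    by simp
qed

end

theorem mainTheorem6:
  fixes d M j k :: nat
  assumes "d \<ge> 1"
    and "M > d \<or> (j = 0 \<and> M \<ge> d)"
  shows "(\<lambda>N. real (skew_schur_ones (replicate d N @ [j]) [k] M)) \<sim>[at_top]
         (\<lambda>N. real N ^ (d * (M - d)) *
              (barnesG_nat (d + 1) * barnesG_nat (M - d + 1) / barnesG_nat (M + 1)) *
              (\<Sum>r = 0..min j k.
                 ((real M - real d + real j - real r - 1) gchoose (j - r)) *
                 ((real d + real k - real r - 1) gchoose (k - r))))"
proof -
  interpret rect_plus_row d M j k using assms by unfold_locales auto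
  have M: "d < M \<or> j = 0" using assms by auto
  have "(\<lambda>N. real (card (skew_tab N))) \<sim>[at_top]
      (\<lambda>N. real (card good_left) *
         (barnesG_nat (d + 1) * barnesG_nat (M - d + 1) / barnesG_nat (M + 1) * real N ^ (d * (M - d))))"
    using card_good_left_pos[OF M]
    by (intro asymp_equiv_shift_sandwich[OF _ card_ssyt_rectangle_shift_asymp[OF dM] card_skew_tab_sandwich])
       simp
  thus ?thesis by (simp add: skew_schur_ones_def real_card_good_left[OF M] mult_ac)
qed

end
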